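(* Let $g\in T$ be represented by a pair of finite rooted binary trees $(T_-,T_+)$ with $n$ leaves each and a shift $k\in\{0,\dots,n-1\}$, so that $g$ maps the $i$-th leaf interval of $T_-$ affinely onto the $\sigma(i)$-th leaf interval of $T_+$, where $\sigma(i)\equiv i+k \pmod n$, $\sigma(i)\in\{1,\dots,n\}$. Form the doubly labelled closed strand diagram of $g$ as in the context, and apply doubly labelled Rule I repeatedly, in any order, until no edge goes from a merge vertex to a split vertex. Then the final diagram contains an oriented cycle, and for any oriented cycle in it, if $a$ is the sum of the blue labels and $b$ the sum of the red labels along the cycle, then $b\ge1$ and the rotation number of $g$ is $\operatorname{rot}(g)=\frac ab \bmod \mathbb Z$.
   Context: Thompson's group $T$ is the group of orientation-preserving homeomorphisms of the circle $\mathbb S=[0,1]/(0\sim1)$ that are piecewise affine with slopes powers of $2$ and finitely many breakpoints at dyadic rationals. A finite rooted binary tree with $n$ leaves (ordered left to right) determines a subdivision of $[0,1]$ into $n$ standard dyadic intervals (the root is $[0,1]$, and a node $[p,q]$ has children $[p,\frac{p+q}2]$ and $[\frac{p+q}2,q]$). For $g\in\mathrm{Homeo}^+(\mathbb S)$ with lift $\hat g\in\mathrm{Homeo}^+(\mathbb R)$, $\operatorname{rot}(g)=\lim_{i\to\infty}\hat g^i(x)/i \bmod\mathbb Z$. Doubly labelled closed strand diagram: a directed graph whose $n-1$ split vertices are the internal nodes of $T_-$ (one incoming edge, two outgoing edges ordered left/right, directed root-to-leaves) and whose $n-1$ merge vertices are the internal nodes of $T_+$ (two incoming edges ordered left/right,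 one outgoing edge, directed leaves-to-root); the $i$-th leaf of $T_-$ is joined to the $\sigma(i)$-th leaf of $T_+$, and the root of $T_+$ is joined to the root of $T_-$, erasing bivalent points so these become single edges. Each edge carries two nonnegative integer labels, red and blue. Red labels: $1$ on the edge through the glued roots, $0$ elsewhere. Blue labels: $1$ on the edge through the junction of leaf $i$ of $T_-$ with leaf $\sigma(i)$ of $T_+$ whenever $i+k>n$ (i.e. the connection wraps around the circle), $0$ elsewhere; if an edge contains several such junctions or the root junction, its labels are the corresponding sums. Doubly labelled Rule I: if an edge $e$ goes from a merge vertex $m$ (incoming edges $x_1$ left, $x_2$ right) to a split vertex $s$ (outgoing edges $z_1$ left, $z_2$ right), delete $m,s,e$ and for $i=1,2$ join strand $x_i$ to strand $z_i$ through $e$; each resulting edge gets, for each colour separately, as label the sum with multiplicity of the labels of the old edge-pieces composing it (e.g. $x_1+y+z_1$ and $x_2+y+z_2$ if the four edges are distinct, $x_1+x_2+2y+z_2$ if $x_2=z_1$). Strands closing up on themselves become vertex-free closed loops labelled by the sums along them (a closed loop counts as an oriented cycle). *)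

theory Defs
  imports Complex_Main
begin

datatype tree = Leaf | Node tree tree

fun nleaves :: "tree \<Rightarrow> nat" where
  "nleaves Leaf = 1"
| "nleaves (Node l r) = nleaves l + nleaves r"

fun leafints :: "tree \<Rightarrow> real \<Rightarrow> real \<Rightarrow> (real \<times> real) list" where
  "leafints Leaf p q = [(p, q)]"
| "leafints (Node l r) p q = leafints l p ((p + q) / 2) @ leafints r ((p + q) / 2) q"

text \<open>Node addresses: False = left child, True = right child; [] is the root.\<close>
fun nodes :: "tree \<Rightarrow> bool list set" where
  "nodes Leaf = {[]}"
| "nodes (Node l r) = {[]} \<union> Cons False ` nodes l \<union> Cons True ` nodes r"

fun leafaddrs :: "tree \<Rightarrow> bool list list" where
  "leafaddrs Leaf = [[]]"
| "leafaddrs (Node l r) = map (Cons False) (leafaddrs l) @ map (Cons True) (leafaddrs r)"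

definition sigma :: "nat \<Rightarrow> nat \<Rightarrow> nat \<Rightarrow> nat" where
  "sigma n k i = (i + k - 1) mod n + 1"

text \<open>The lift to the real line of the element g of T given by (T_-, T_+, k):
  on [0,1) the (0-based) j-th leaf interval of T_- is mapped affinely onto the
  sigma-th leaf interval of T_+, plus 1 when the connection wraps around (j+1+k > n);
  the lift commutes with integer translations.\<close>
definition glift :: "tree \<Rightarrow> tree \<Rightarrow> nat \<Rightarrow> real \<Rightarrow> real" where
  "glift Tm Tp k x =
     (let n = nleaves Tm; I = leafints Tm 0 1; J = leafints Tp 0 1; y = frac x;
          j = (LEAST j. y < snd (I ! j)); s = (j + k) mod n
      in of_int \<lfloor>x\<rfloor> + fst (J ! s)
         + (y - fst (I ! j)) * (snd (J ! s) - fst (J ! s)) / (snd (I ! j) - fst (I ! j))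
         + (if n < j + 1 + k then 1 else 0))"

definition rot_number :: "(real \<Rightarrow> real) \<Rightarrow> real" where
  "rot_number f = frac (lim (\<lambda>i. (f ^^ i) 0 / real i))"

text \<open>Diagrams are represented with explicit bivalent "Pass" vertices: a strand of the
  diagram (an edge after erasing bivalent points) is a path through Pass vertices, and its
  labels are the sums of the labels of its pieces. Ports: a Split vertex has out-ports 0
  (left) and 1 (right), a Merge vertex has in-ports 0 (left) and 1 (right); all other ports
  are 0.\<close>

datatype vkind = Split | Merge | Pass

datatype vid = VM "bool list" | VP "bool list" | VF nat
datatype eid = EM "bool list" | EP "bool list" | EJ nat | ER | EF nat

record sd =
  sd_verts :: "vid set"
  sd_kind :: "vid \<Rightarrow> vkind"
  sd_edges :: "eid set"
  sd_tail :: "eid \<Rightarrow> vid \<times> nat"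
  sd_head :: "eid \<Rightarrow> vid \<times> nat"
  sd_red :: "eid \<Rightarrow> nat"
  sd_blue :: "eid \<Rightarrow> nat"

definition port :: "bool \<Rightarrow> nat" where
  "port b = (if b then 1 else 0)"

text \<open>The doubly labelled closed strand diagram of (T_-, T_+, k): vertices are the nodes of
  T_- (internal: split, leaves: bivalent) and of T_+ (internal: merge, leaves: bivalent);
  edges are the tree edges, the junction edges leaf i of T_- to leaf sigma(i) of T_+
  (blue label 1 iff i+k > n), and the root edge from the root of T_+ to the root of T_-
  (red label 1).\<close>
definition init_sd :: "tree \<Rightarrow> tree \<Rightarrow> nat \<Rightarrow> sd" where
  "init_sd Tm Tp k = (let n = nleaves Tm in
    \<lparr> sd_verts = VM ` nodes Tm \<union> VP ` nodes Tp,
      sd_kind = (\<lambda>v. case v of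
                   VM w \<Rightarrow> (if w \<in> set (leafaddrs Tm) then Pass else Split)
                 | VP w \<Rightarrow> (if w \<in> set (leafaddrs Tp) then Pass else Merge)
                 | VF _ \<Rightarrow> Pass),
      sd_edges = EM ` (nodes Tm - {[]}) \<union> EP ` (nodes Tp - {[]}) \<union> EJ ` {1..n} \<union> {ER},
      sd_tail = (\<lambda>e. case e of
                   EM w \<Rightarrow> (VM (butlast w), port (last w))
                 | EP w \<Rightarrow> (VP w, 0)
                 | EJ i \<Rightarrow> (VM (leafaddrs Tm ! (i - 1)), 0)
                 | ER \<Rightarrow> (VP [], 0)
                 | EF _ \<Rightarrow> (VF 0, 0)),
      sd_head = (\<lambda>e. case e of
                   EM w \<Rightarrow> (VM w, 0)
                 | EP w \<Rightarrow> (VP (butlast w), port (last w))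
                 | EJ i \<Rightarrow> (VP (leafaddrs Tp ! (sigma n k i - 1)), 0)
                 | ER \<Rightarrow> (VM [], 0)
                 | EF _ \<Rightarrow> (VF 0, 0)),
      sd_red = (\<lambda>e. if e = ER then 1 else 0),
      sd_blue = (\<lambda>e. case e of EJ i \<Rightarrow> (if n < i + k then 1 else 0) | _ \<Rightarrow> 0) \<rparr>)"

definition ms_strand :: "sd \<Rightarrow> eid list \<Rightarrow> bool" where
  "ms_strand D es \<longleftrightarrow> es \<noteq> [] \<and> distinct es \<and> set es \<subseteq> sd_edges D
     \<and> fst (sd_tail D (hd es)) \<in> sd_verts D \<and> sd_kind D (fst (sd_tail D (hd es))) = Merge
     \<and> fst (sd_head D (last es)) \<in> sd_verts D \<and> sd_kind D (fst (sd_head D (last es))) = Split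
     \<and> (\<forall>j. Suc j < length es \<longrightarrow>
            fst (sd_head D (es ! j)) = fst (sd_tail D (es ! Suc j))
          \<and> fst (sd_head D (es ! j)) \<in> sd_verts D
          \<and> sd_kind D (fst (sd_head D (es ! j))) = Pass)"

text \<open>The strand es (labels y = sums along es) from merge m to split
  s is deleted together with m and s; strand x_i (entering m at port i) is joined to strand
  z_i (leaving s at port i) through a new piece carrying the labels y (x_i ~ a_i -> b_i ~ z_i,
  with new bivalent vertices a_i, b_i). Coincidences such as x_2 = z_1 are handled
  automatically since head and tail of an edge are re-pointed independently.\<close>
inductive ruleI :: "sd \<Rightarrow> sd \<Rightarrow> bool" where
  "\<lbrakk> ms_strand D es;
     m = fst (sd_tail D (hd es)); s = fst (sd_head D (last es));
     P = set (map (\<lambda>e. fst (sd_head D e)) (butlast es));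
     x1 \<in> sd_edges D; sd_head D x1 = (m, 0); x2 \<in> sd_edges D; sd_head D x2 = (m, 1);
     z1 \<in> sd_edges D; sd_tail D z1 = (s, 0); z2 \<in> sd_edges D; sd_tail D z2 = (s, 1);
     distinct [a1, b1, a2, b2]; {a1, b1, a2, b2} \<inter> sd_verts D = {};
     f1 \<noteq> f2; f1 \<notin> sd_edges D; f2 \<notin> sd_edges D;
     ry = sum_list (map (sd_red D) es); by = sum_list (map (sd_blue D) es);
     D' = \<lparr> sd_verts = (sd_verts D - ({m, s} \<union> P)) \<union> {a1, b1, a2, b2},
            sd_kind = (sd_kind D)(a1 := Pass, b1 := Pass, a2 := Pass, b2 := Pass),
            sd_edges = (sd_edges D - set es) \<union> {f1, f2},
            sd_tail = (sd_tail D)(z1 := (b1, 0), z2 := (b2, 0), f1 := (a1, 0), f2 := (a2, 0)),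
            sd_head = (sd_head D)(x1 := (a1, 0), x2 := (a2, 0), f1 := (b1, 0), f2 := (b2, 0)),
            sd_red = (sd_red D)(f1 := ry, f2 := ry),
            sd_blue = (sd_blue D)(f1 := by, f2 := by) \<rparr> \<rbrakk>
   \<Longrightarrow> ruleI D D'"

text \<open>Oriented cycles (closed loops included: cycles through bivalent vertices only).\<close>
definition is_cycle :: "sd \<Rightarrow> eid list \<Rightarrow> bool" where
  "is_cycle D cs \<longleftrightarrow> cs \<noteq> [] \<and> set cs \<subseteq> sd_edges D
     \<and> distinct (map (\<lambda>e. fst (sd_tail D e)) cs)
     \<and> (\<forall>j < length cs. fst (sd_head D (cs ! j)) = fst (sd_tail D (cs ! ((j + 1) mod length cs))))"

definition cycle_blue :: "sd \<Rightarrow> eid list \<Rightarrow> nat" where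
  "cycle_blue D cs = sum_list (map (sd_blue D) cs)"

definition cycle_red :: "sd \<Rightarrow> eid list \<Rightarrow> nat" where
  "cycle_red D cs = sum_list (map (sd_red D) cs)"

end

(* Follow points through the diagram. A point sits on a piece of a strand at a relative
   position t in [0,1); passing a merge vertex through its port i sends t to (t + i)/2, and
   passing a split vertex is the inverse move. In the initial diagram the pieces carry the dyadic
   intervals of the two trees, so a point descends T_-, crosses a junction (where g acts and the
   blue label records the integer part of the lift) and climbs T_+ to the root edge, the only red
   edge. Hence along every trajectory ghat^(red sum)(0) stays within bounded distance of the blue
   sum, and trajectories avoiding the root edge are uniformly short.
   Rule I creates no new motion: each trajectory of the new diagram expands into one of the old
   diagram with the same labels and at least the same length, so both properties persist.
   In a diagram to which Rule I no longer applies, no cycle passes both a merge and a split (the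
   closest such pair would bound a merge-to-split edge), so a point can be followed around a
   cycle arbitrarily often, forwards or backwards. Going m times around a cycle with label sums
   (a, b) gives a trajectory with red sum m b and blue sum m a: shortness forces b >= 1, and
   ghat^(m b)(0) = m a + O(1) gives rot(g) = a/b. A cycle exists because every vertex has an
   outgoing edge. *)

theory Submission
  imports Defs
begin

section \<open>Binary trees and dyadic intervals\<close>

lemma root_in_nodes [simp]: "[] \<in> nodes T"
  by (cases T) auto

lemma set_leafaddrs_subset_nodes: "set (leafaddrs T) \<subseteq> nodes T"
  by (induction T) auto

lemma snoc_in_nodesD: "w @ [b] \<in> nodes T \<Longrightarrow> w \<in> nodes T \<and> w \<notin> set (leafaddrs T)"
proof (induction T arbitrary: w)
  case (Node l r)
  then show ?case
    by (cases w) (auto simp: image_iff split: if_splits)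
qed simp

lemma snoc_in_nodesI: "w \<in> nodes T \<Longrightarrow> w \<notin> set (leafaddrs T) \<Longrightarrow> w @ [b] \<in> nodes T"
proof (induction T arbitrary: w)
  case (Node l r)
  show ?case
  proof (cases w)
    case Nil
    then show ?thesis by (cases b) (auto intro!: image_eqI[where x="[]"])
  next
    case (Cons c w')
    then have "w' \<in> nodes (if c then r else l)" "w' \<notin> set (leafaddrs (if c then r else l))"
      using Node.prems by (cases c; auto)+
    then have "w' @ [b] \<in> nodes (if c then r else l)"
      using Node.IH by (cases c) auto
    then show ?thesis using Cons by (cases c) auto
  qed
qed simp

lemma butlast_in_nodes:
  "w \<in> nodes T \<Longrightarrow> w \<noteq> [] \<Longrightarrow> butlast w \<in> nodes T \<and> butlast w \<notin> set (leafaddrs T)"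
  using snoc_in_nodesD[of "butlast w" "last w" T] by simp

lemma distinct_leafaddrs: "distinct (leafaddrs T)"
  by (induction T) (auto simp: distinct_map)

lemma length_leafaddrs [simp]: "length (leafaddrs T) = nleaves T"
  by (induction T) auto

lemma finite_nodes: "finite (nodes T)"
  by (induction T) auto

lemma nleaves_ge_1: "1 \<le> nleaves T"
  by (induction T) auto

fun height :: "tree \<Rightarrow> nat" where
  "height Leaf = 0"
| "height (Node l r) = Suc (max (height l) (height r))"

lemma length_le_height: "w \<in> nodes T \<Longrightarrow> length w \<le> height T"
  by (induction T arbitrary: w) fastforce+

fun dyadic_int :: "bool list \<Rightarrow> real \<Rightarrow> real \<Rightarrow> real \<times> real" where
  "dyadic_int [] p q = (p, q)"
| "dyadic_int (b # w) p q = (if b then dyadic_int w ((p + q) / 2) q else dyadic_int w p ((p + q) / 2))"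

definition interval_point :: "real \<times> real \<Rightarrow> real \<Rightarrow> real" where
  "interval_point I t = fst I + t * (snd I - fst I)"

lemma leafints_conv_dyadic_int: "leafints T p q = map (\<lambda>w. dyadic_int w p q) (leafaddrs T)"
  by (induction T arbitrary: p q) (auto simp: comp_def)

lemma length_leafints [simp]: "length (leafints T p q) = nleaves T"
  by (simp add: leafints_conv_dyadic_int)

lemma leafints_not_Nil: "leafints T p q \<noteq> []"
  using nleaves_ge_1[of T] by (metis length_leafints list.size(3) not_one_le_zero)

lemma dyadic_int_snoc:
  "dyadic_int (w @ [b]) p q =
    (if b then ((fst (dyadic_int w p q) + snd (dyadic_int w p q)) / 2, snd (dyadic_int w p q))
     else (fst (dyadic_int w p q), (fst (dyadic_int w p q) + snd (dyadic_int w p q)) / 2))"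
  by (induction w arbitrary: p q) auto

lemma dyadic_int_bounds:
  "p < q \<Longrightarrow> p \<le> fst (dyadic_int w p q) \<and> snd (dyadic_int w p q) \<le> q
    \<and> fst (dyadic_int w p q) < snd (dyadic_int w p q)"
proof (induction w arbitrary: p q)
  case (Cons b w)
  then show ?case
    using Cons.IH[of "(p + q) / 2" q] Cons.IH[of p "(p + q) / 2"] by (cases b) fastforce+
qed simp

lemma interval_point_snoc:
  "interval_point (dyadic_int (w @ [b]) p q) t = interval_point (dyadic_int w p q) ((t + real (port b)) / 2)"
  by (simp add: dyadic_int_snoc interval_point_def port_def field_simps)

lemma interval_point_bounds:
  assumes "fst I < snd I" "0 \<le> t" "t < 1"
  shows "fst I \<le> interval_point I t \<and> interval_point I t < snd I"
proof -
  have "t * (snd I - fst I) < 1 * (snd I - fst I)"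
    using assms by (intro mult_strict_right_mono) auto
  moreover have "0 \<le> t * (snd I - fst I)" using assms by simp
  ultimately show ?thesis unfolding interval_point_def by simp
qed

lemma interval_point_dyadic_int_bounds:
  "p < q \<Longrightarrow> 0 \<le> t \<Longrightarrow> t < 1 \<Longrightarrow> p \<le> interval_point (dyadic_int w p q) t \<and> interval_point (dyadic_int w p q) t < q"
  using interval_point_bounds[of "dyadic_int w p q" t] dyadic_int_bounds[of p q w] by fastforce

lemma interval_point_mono:
  assumes "fst I < snd I" "t \<le> t'"
  shows "interval_point I t \<le> interval_point I t'"
  using assms unfolding interval_point_def by (simp add: mult_right_mono)

lemma fst_hd_leafints: "fst (hd (leafints T p q)) = p"
  by (induction T arbitrary: p q) (auto simp: leafints_not_Nil)

lemma snd_last_leafints: "snd (last (leafints T p q)) = q"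
  by (induction T arbitrary: p q) (auto simp: leafints_not_Nil)

lemma leafints_adjacent:
  "Suc j < nleaves T \<Longrightarrow> snd (leafints T p q ! j) = fst (leafints T p q ! Suc j)"
proof (induction T arbitrary: p q j)
  case (Node l r)
  let ?A = "leafints l p ((p + q) / 2)" and ?B = "leafints r ((p + q) / 2) q"
  consider "Suc j < length ?A" | "Suc j = length ?A" | "length ?A < Suc j" by linarith
  then show ?case
  proof cases
    case 1
    then show ?thesis using Node.IH(1) by (simp add: nth_append)
  next
    case 2
    then have "j = length ?A - 1" by simp
    then have "?A ! j = last ?A" "?B ! 0 = hd ?B"
      using leafints_not_Nil by (simp_all add: last_conv_nth hd_conv_nth del: length_leafints)
    then show ?thesis
      using 2 by (simp add: nth_append fst_hd_leafints snd_last_leafints)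
  next
    case 3
    then show ?thesis
      using Node.IH(2)[of "j - nleaves l"] Node.prems by (simp add: nth_append Suc_diff_le)
  qed
qed simp

lemma leafint_bounds:
  assumes "p < q" "j < nleaves T"
  shows "p \<le> fst (leafints T p q ! j) \<and> snd (leafints T p q ! j) \<le> q
         \<and> fst (leafints T p q ! j) < snd (leafints T p q ! j)"
  using assms dyadic_int_bounds[of p q "leafaddrs T ! j"] by (simp add: leafints_conv_dyadic_int)

lemma leafints_sorted:
  assumes "p < q" "j < j'" "j' < nleaves T"
  shows "snd (leafints T p q ! j) \<le> fst (leafints T p q ! j')"
  using assms(2,3)
proof (induction j')
  case (Suc j')
  have "snd (leafints T p q ! j) \<le> snd (leafints T p q ! j')"
    using Suc leafint_bounds[OF assms(1), of j' T] by (cases "j = j'") fastforce+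
  then show ?case using leafints_adjacent[of j' T p q] Suc.prems by simp
qed simp

lemma Least_leafint:
  assumes "p < q" "j < nleaves T"
    and "fst (leafints T p q ! j) \<le> y" "y < snd (leafints T p q ! j)"
  shows "(LEAST j. y < snd (leafints T p q ! j)) = j"
proof (rule Least_equality)
  fix j' assume "y < snd (leafints T p q ! j')"
  then show "j \<le> j'"
    using assms leafints_sorted[OF assms(1), of j' j T] by force
qed (use assms in simp)

lemma leafint_cover:
  assumes "p \<le> y" "y < q"
  obtains j where "j < nleaves T" "fst (leafints T p q ! j) \<le> y" "y < snd (leafints T p q ! j)"
proof -
  let ?L = "leafints T p q"
  have last: "?L ! (nleaves T - 1) = last ?L"
    by (simp add: last_conv_nth leafints_not_Nil)
  then have ex: "y < snd (?L ! (nleaves T - 1))" using assms snd_last_leafints by metis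
  define j where "j = (LEAST j. y < snd (?L ! j))"
  have j1: "y < snd (?L ! j)" unfolding j_def by (rule LeastI, rule ex)
  have j2: "j \<le> nleaves T - 1" unfolding j_def by (rule Least_le, rule ex)
  have j3: "fst (?L ! j) \<le> y"
  proof (cases j)
    case 0
    then show ?thesis
      using assms fst_hd_leafints[of T p q] by (simp add: hd_conv_nth leafints_not_Nil)
  next
    case (Suc i)
    then have "\<not> y < snd (?L ! i)" using not_less_Least[of i "\<lambda>j. y < snd (?L ! j)"] j_def by simp
    then show ?thesis using leafints_adjacent[of i T p q] Suc j2 nleaves_ge_1[of T] by simp
  qed
  have "j < nleaves T" using j2 nleaves_ge_1[of T] by linarith
  then show ?thesis using that j1 j3 by blast
qed

section \<open>The lift of g\<close>

definition gpiece :: "tree \<Rightarrow> tree \<Rightarrow> nat \<Rightarrow> nat \<Rightarrow> real \<Rightarrow> real" where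
  "gpiece Tm Tp k j y =
     (let n = nleaves Tm; I = leafints Tm 0 1 ! j; J = leafints Tp 0 1 ! ((j + k) mod n)
      in interval_point J ((y - fst I) / (snd I - fst I)) + (if n < j + 1 + k then 1 else 0))"

definition gbase :: "tree \<Rightarrow> tree \<Rightarrow> nat \<Rightarrow> real \<Rightarrow> real" where
  "gbase Tm Tp k y = gpiece Tm Tp k (LEAST j. y < snd (leafints Tm 0 1 ! j)) y"

lemma glift_eq_gbase: "glift Tm Tp k x = of_int \<lfloor>x\<rfloor> + gbase Tm Tp k (frac x)"
  unfolding glift_def gbase_def gpiece_def interval_point_def Let_def by simp

lemma gbase_eq_gpiece:
  assumes "j < nleaves Tm" "fst (leafints Tm 0 1 ! j) \<le> y" "y < snd (leafints Tm 0 1 ! j)"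
  shows "gbase Tm Tp k y = gpiece Tm Tp k j y"
  using Least_leafint[OF zero_less_one assms] unfolding gbase_def by simp

locale tree_pair_element =
  fixes Tm Tp :: tree and n k :: nat
  assumes nleaves_Tm: "nleaves Tm = n" and nleaves_Tp: "nleaves Tp = n" and k_less_n: "k < n"
begin

abbreviation "I \<equiv> leafints Tm 0 1"
abbreviation "J \<equiv> leafints Tp 0 1"
abbreviation "target j \<equiv> (j + k) mod n"
abbreviation "wraps j \<equiv> (if n < j + 1 + k then 1 else 0 :: real)"
abbreviation "ghat \<equiv> glift Tm Tp k"

lemma target_less: "target j < n"
  using k_less_n by simp

lemma I_bounds: "j < n \<Longrightarrow> 0 \<le> fst (I ! j) \<and> snd (I ! j) \<le> 1 \<and> fst (I ! j) < snd (I ! j)"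
  using leafint_bounds[of 0 1 j Tm] nleaves_Tm by simp

lemma J_bounds: "0 \<le> fst (J ! target j) \<and> snd (J ! target j) \<le> 1 \<and> fst (J ! target j) < snd (J ! target j)"
  using leafint_bounds[of 0 1 "target j" Tp] nleaves_Tp target_less by simp

lemma gpiece_eq_interval_point:
  "gpiece Tm Tp k j y = interval_point (J ! target j) ((y - fst (I ! j)) / (snd (I ! j) - fst (I ! j))) + wraps j"
  unfolding gpiece_def Let_def nleaves_Tm by simp

lemma gpiece_bounds:
  assumes "j < n" "fst (I ! j) \<le> y" "y < snd (I ! j)"
  shows "fst (J ! target j) + wraps j \<le> gpiece Tm Tp k j y \<and> gpiece Tm Tp k j y < snd (J ! target j) + wraps j"
proof -
  have "0 \<le> (y - fst (I ! j)) / (snd (I ! j) - fst (I ! j))" "(y - fst (I ! j)) / (snd (I ! j) - fst (I ! j)) < 1"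
    using I_bounds[OF assms(1)] assms by (auto simp: divide_simps)
  then show ?thesis
    using interval_point_bounds J_bounds gpiece_eq_interval_point by fastforce
qed

lemma gpiece_mono:
  assumes "j < n" "y \<le> y'"
  shows "gpiece Tm Tp k j y \<le> gpiece Tm Tp k j y'"
  using I_bounds[OF assms(1)] J_bounds assms
  by (simp add: gpiece_eq_interval_point interval_point_mono divide_right_mono)

lemma gpiece_wrap_order:
  assumes "j < j'" "j' < n"
  shows "snd (J ! target j) + wraps j \<le> fst (J ! target j') + wraps j'"
proof -
  have sorted: "snd (J ! target j) \<le> fst (J ! target j')" if "target j < target j'"
    using leafints_sorted[of 0 1 "target j" "target j'" Tp] that target_less nleaves_Tp by simp
  consider "n < j + 1 + k" | "\<not> n < j + 1 + k" "n < j' + 1 + k" | "\<not> n < j' + 1 + k"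
    using assms by linarith
  then show ?thesis
  proof cases
    case 1
    then have "target j = j + k - n" "target j' = j' + k - n"
      using assms k_less_n by (simp_all add: mod_if)
    then show ?thesis using 1 assms sorted by simp
  next
    case 2
    then show ?thesis using J_bounds[of j] J_bounds[of j'] by simp
  next
    case 3
    then show ?thesis using assms sorted by simp
  qed
qed

lemma gbase_piece:
  assumes "0 \<le> y" "y < 1"
  obtains j where "j < n" "fst (I ! j) \<le> y" "y < snd (I ! j)" "gbase Tm Tp k y = gpiece Tm Tp k j y"
  using leafint_cover[OF assms, of Tm] gbase_eq_gpiece nleaves_Tm by metis

lemma gbase_mono:
  assumes "0 \<le> y" "y \<le> y'" "y' < 1"
  shows "gbase Tm Tp k y \<le> gbase Tm Tp k y'"
proof -
  obtain j where j: "j < n" "fst (I ! j) \<le> y" "y < snd (I ! j)" "gbase Tm Tp k y = gpiece Tm Tp k j y"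
    using gbase_piece assms by (metis order.strict_trans1)
  obtain j' where j': "j' < n" "fst (I ! j') \<le> y'" "y' < snd (I ! j')" "gbase Tm Tp k y' = gpiece Tm Tp k j' y'"
    using gbase_piece assms by (metis order.trans)
  consider "j = j'" | "j < j'" | "j' < j" by linarith
  then show ?thesis
  proof cases
    case 1
    then show ?thesis using j j' gpiece_mono assms by simp
  next
    case 2
    then show ?thesis
      using gpiece_bounds[OF j(1-3)] gpiece_bounds[OF j'(1-3)] gpiece_wrap_order[OF 2 j'(1)] j(4) j'(4)
      by linarith
  next
    case 3
    then show ?thesis
      using leafints_sorted[of 0 1 j' j Tm] j j' assms nleaves_Tm by simp
  qed
qed

lemma gbase_0: "gbase Tm Tp k 0 = fst (J ! k)"
proof -
  have I0: "fst (I ! 0) = 0"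
    using fst_hd_leafints[of Tm 0 1] leafints_not_Nil by (simp add: hd_conv_nth)
  then have "gbase Tm Tp k 0 = gpiece Tm Tp k 0 0"
    using gbase_eq_gpiece[of 0 Tm 0] I_bounds[of 0] nleaves_Tm k_less_n by simp
  also have "\<dots> = fst (J ! k)"
    using k_less_n I0 by (simp add: gpiece_eq_interval_point interval_point_def)
  finally show ?thesis .
qed

lemma gbase_bounds:
  assumes "0 \<le> y" "y < 1"
  shows "0 \<le> gbase Tm Tp k y \<and> gbase Tm Tp k y \<le> gbase Tm Tp k 0 + 1 \<and> gbase Tm Tp k 0 < 1"
proof -
  obtain j where j: "j < n" "fst (I ! j) \<le> y" "y < snd (I ! j)" "gbase Tm Tp k y = gpiece Tm Tp k j y"
    using gbase_piece[OF assms] by blast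
  note bounds = gpiece_bounds[OF j(1-3)] J_bounds[of j]
  have "snd (J ! target j) \<le> fst (J ! k)" if "n < j + 1 + k"
  proof -
    have "target j = j + k - n" using j that k_less_n by (simp add: mod_if le_mod_geq)
    then have "target j < k" using j that by linarith
    then show ?thesis using leafints_sorted[of 0 1 "target j" k Tp] nleaves_Tp k_less_n by simp
  qed
  moreover have "0 \<le> fst (J ! k) \<and> fst (J ! k) < 1" using J_bounds[of 0] k_less_n by simp
  ultimately show ?thesis using bounds j(4) gbase_0 by (auto split: if_splits)
qed

lemma gbase_junction:
  assumes "j < n" "0 \<le> t" "t < 1"
  shows "gbase Tm Tp k (interval_point (I ! j) t) = interval_point (J ! target j) t + wraps j"
proof -
  have I: "fst (I ! j) < snd (I ! j)" using I_bounds[OF assms(1)] by simp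
  then have "fst (I ! j) \<le> interval_point (I ! j) t" "interval_point (I ! j) t < snd (I ! j)"
    using interval_point_bounds[OF I assms(2,3)] by auto
  then have "gbase Tm Tp k (interval_point (I ! j) t) = gpiece Tm Tp k j (interval_point (I ! j) t)"
    using gbase_eq_gpiece assms(1) nleaves_Tm by simp
  also have "\<dots> = interval_point (J ! target j) t + wraps j"
    using I assms(1) by (simp add: gpiece_eq_interval_point interval_point_def)
  finally show ?thesis .
qed

lemma ghat_eq_gbase: "0 \<le> y \<Longrightarrow> y < 1 \<Longrightarrow> ghat y = gbase Tm Tp k y"
  unfolding glift_eq_gbase by (simp add: frac_eq floor_eq_iff)

lemma ghat_shift: "ghat (x + real m) = ghat x + real m"
  unfolding glift_eq_gbase by (simp add: frac_def)

lemma ghat_displacement: "x - 1 < ghat x \<and> ghat x < x + 2"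
proof -
  have "0 \<le> frac x" "frac x < 1" by (auto simp: frac_lt_1)
  moreover have "x = of_int \<lfloor>x\<rfloor> + frac x" by (simp add: frac_def)
  ultimately show ?thesis
    unfolding glift_eq_gbase using gbase_bounds[of "frac x"] by linarith
qed

lemma ghat_mono: "x \<le> x' \<Longrightarrow> ghat x \<le> ghat x'"
proof -
  assume xx: "x \<le> x'"
  have f: "0 \<le> frac x" "frac x < 1" "0 \<le> frac x'" "frac x' < 1" by (auto simp: frac_lt_1)
  have ex: "x = of_int \<lfloor>x\<rfloor> + frac x" "x' = of_int \<lfloor>x'\<rfloor> + frac x'" by (simp_all add: frac_def)
  have fl: "\<lfloor>x\<rfloor> \<le> \<lfloor>x'\<rfloor>" using xx by (rule floor_mono)
  show ?thesis
  proof (cases "\<lfloor>x\<rfloor> = \<lfloor>x'\<rfloor>")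
    case True
    then have "frac x \<le> frac x'" using ex xx by linarith
    then show ?thesis unfolding glift_eq_gbase using gbase_mono f True by simp
  next
    case False
    then have "real_of_int \<lfloor>x\<rfloor> + 1 \<le> of_int \<lfloor>x'\<rfloor>" using fl by linarith
    moreover have "gbase Tm Tp k (frac x) \<le> gbase Tm Tp k 0 + 1" using gbase_bounds f by simp
    moreover have "gbase Tm Tp k 0 \<le> gbase Tm Tp k (frac x')" using gbase_mono[of 0 "frac x'"] f by simp
    ultimately show ?thesis unfolding glift_eq_gbase by linarith
  qed
qed

lemma funpow_ghat_mono: "x \<le> x' \<Longrightarrow> (ghat ^^ N) x \<le> (ghat ^^ N) x'"
  by (induction N) (auto intro: ghat_mono)

lemma funpow_ghat_shift: "(ghat ^^ N) (x + real m) = (ghat ^^ N) x + real m"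
  by (induction N) (auto simp: ghat_shift)

lemma funpow_ghat_displacement: "\<bar>(ghat ^^ N) x - x\<bar> \<le> 2 * real N"
proof (induction N)
  case (Suc N)
  have "\<bar>ghat ((ghat ^^ N) x) - (ghat ^^ N) x\<bar> \<le> 2"
    using ghat_displacement[of "(ghat ^^ N) x"] by (simp add: abs_le_iff)
  then show ?case using Suc by simp
qed simp

lemma funpow_ghat_unit_interval:
  assumes "0 \<le> y" "y \<le> 1"
  shows "\<bar>(ghat ^^ N) y - (ghat ^^ N) 0\<bar> \<le> 1"
  using funpow_ghat_mono[of 0 y N] funpow_ghat_mono[of y 1 N] funpow_ghat_shift[of N 0 1] assms by simp

lemma funpow_ghat_diff: "\<bar>(ghat ^^ a) y - (ghat ^^ b) y\<bar> \<le> 2 * \<bar>real a - real b\<bar>"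
proof -
  have step: "\<bar>(ghat ^^ (d + c)) y - (ghat ^^ c) y\<bar> \<le> 2 * real d" for c d
    using funpow_ghat_displacement[of d "(ghat ^^ c) y"] by (simp add: funpow_add)
  show ?thesis
  proof (cases "a \<le> b")
    case True
    then show ?thesis using step[of "b - a" a] by (simp add: abs_minus_commute of_nat_diff)
  next
    case False
    then show ?thesis using step[of "a - b" b] by (simp add: of_nat_diff)
  qed
qed

end

lemma LIMSEQ_funpow_div:
  fixes g :: "real \<Rightarrow> real" and a b :: nat and C M :: real
  assumes b: "1 \<le> b" and period: "\<And>m. \<bar>(g ^^ (m * b)) 0 - real (m * a)\<bar> \<le> C"
    and displacement: "\<And>N x. \<bar>(g ^^ N) x - x\<bar> \<le> M * real N"
  shows "(\<lambda>N. (g ^^ N) 0 / real N) \<longlonglongrightarrow> real a / real b"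
proof -
  define K where "K = \<bar>C\<bar> + \<bar>M\<bar> * real b + real a"
  have bound: "\<bar>(g ^^ N) 0 - real N * (real a / real b)\<bar> \<le> K" for N
  proof -
    define m r where "m = N div b" and "r = N mod b"
    have N: "N = r + m * b" and rb: "r < b" unfolding m_def r_def using b by simp_all
    have "\<bar>(g ^^ N) 0 - (g ^^ (m * b)) 0\<bar> \<le> M * real r"
      using displacement[of r "(g ^^ (m * b)) 0"] unfolding N by (simp add: funpow_add)
    also have "\<dots> \<le> \<bar>M\<bar> * real r" by (simp add: mult_right_mono)
    also have "\<dots> \<le> \<bar>M\<bar> * real b" using rb by (simp add: mult_left_mono)
    finally have e1: "\<bar>(g ^^ N) 0 - (g ^^ (m * b)) 0\<bar> \<le> \<bar>M\<bar> * real b" .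
    have "real r * real a \<le> real b * real a"
      using rb by (simp add: mult_right_mono)
    then have "0 \<le> real r * real a / real b" "real r * real a / real b \<le> real a"
      using b by (simp_all add: divide_le_eq mult.commute)
    moreover have "real N * (real a / real b) = real (m * a) + real r * real a / real b"
      unfolding N using b by (simp add: field_simps)
    ultimately show ?thesis
      using e1 period[of m] abs_ge_self[of C] unfolding K_def abs_le_iff by (intro conjI; linarith)
  qed
  have "\<bar>(g ^^ N) 0 / real N - real a / real b\<bar> \<le> K / real N" if "1 \<le> N" for N
  proof -
    have "\<bar>(g ^^ N) 0 / real N - real a / real b\<bar> = \<bar>(g ^^ N) 0 - real N * (real a / real b)\<bar> / real N"
      using that by (simp add: field_simps)
    then show ?thesis using bound[of N] by (simp add: divide_right_mono)
  qed
  then have "\<forall>\<^sub>F N in sequentially. dist ((g ^^ N) 0 / real N) (real a / real b) \<le> dist (K / real N) 0"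
    unfolding dist_real_def by (intro eventually_sequentiallyI[of 1]) (simp add: K_def)
  with lim_const_over_n[of K] show ?thesis
    by (rule metric_tendsto_imp_tendsto)
qed

section \<open>Points moving through a strand diagram\<close>

definition flow_step :: "sd \<Rightarrow> eid \<Rightarrow> real \<Rightarrow> eid \<Rightarrow> real \<Rightarrow> bool" where
  "flow_step D e t e' t' \<longleftrightarrow> e \<in> sd_edges D \<and> e' \<in> sd_edges D
     \<and> fst (sd_head D e) = fst (sd_tail D e') \<and> fst (sd_head D e) \<in> sd_verts D
     \<and> (sd_kind D (fst (sd_head D e)) = Pass \<longrightarrow> t' = t)
     \<and> (sd_kind D (fst (sd_head D e)) = Merge \<longrightarrow> t' = (t + real (snd (sd_head D e))) / 2)
     \<and> (sd_kind D (fst (sd_head D e)) = Split \<longrightarrow> t = (t' + real (snd (sd_tail D e'))) / 2)"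

abbreviation flows :: "sd \<Rightarrow> eid \<times> real \<Rightarrow> eid \<times> real \<Rightarrow> bool" where
  "flows D p q \<equiv> flow_step D (fst p) (snd p) (fst q) (snd q)"

definition trajectory :: "sd \<Rightarrow> (eid \<times> real) list \<Rightarrow> bool" where
  "trajectory D ss \<longleftrightarrow> ss \<noteq> [] \<and> (\<forall>p \<in> set ss. fst p \<in> sd_edges D \<and> 0 \<le> snd p \<and> snd p < 1)
     \<and> successively (flows D) ss"

definition red_sum :: "sd \<Rightarrow> (eid \<times> real) list \<Rightarrow> nat" where
  "red_sum D ss = sum_list (map (\<lambda>p. sd_red D (fst p)) ss)"

definition blue_sum :: "sd \<Rightarrow> (eid \<times> real) list \<Rightarrow> nat" where
  "blue_sum D ss = sum_list (map (\<lambda>p. sd_blue D (fst p)) ss)"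

definition wf_sd :: "sd \<Rightarrow> bool" where
  "wf_sd D \<longleftrightarrow> finite (sd_verts D) \<and> finite (sd_edges D) \<and> sd_verts D \<noteq> {}
    \<and> (\<forall>e\<in>sd_edges D. fst (sd_tail D e) \<in> sd_verts D \<and> fst (sd_head D e) \<in> sd_verts D)
    \<and> (\<forall>e\<in>sd_edges D. snd (sd_tail D e) \<le> 1 \<and> (sd_kind D (fst (sd_tail D e)) \<noteq> Split \<longrightarrow> snd (sd_tail D e) = 0)
          \<and> snd (sd_head D e) \<le> 1 \<and> (sd_kind D (fst (sd_head D e)) \<noteq> Merge \<longrightarrow> snd (sd_head D e) = 0))
    \<and> inj_on (sd_tail D) (sd_edges D) \<and> inj_on (sd_head D) (sd_edges D)
    \<and> (\<forall>v\<in>sd_verts D. \<exists>e\<in>sd_edges D. fst (sd_tail D e) = v)"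

lemma wf_sdD:
  assumes "wf_sd D"
  shows "finite (sd_verts D)" "finite (sd_edges D)" "sd_verts D \<noteq> {}"
    "\<And>e. e \<in> sd_edges D \<Longrightarrow> fst (sd_tail D e) \<in> sd_verts D"
    "\<And>e. e \<in> sd_edges D \<Longrightarrow> fst (sd_head D e) \<in> sd_verts D"
    "\<And>e. e \<in> sd_edges D \<Longrightarrow> snd (sd_tail D e) \<le> 1"
    "\<And>e. e \<in> sd_edges D \<Longrightarrow> sd_kind D (fst (sd_tail D e)) \<noteq> Split \<Longrightarrow> snd (sd_tail D e) = 0"
    "\<And>e. e \<in> sd_edges D \<Longrightarrow> snd (sd_head D e) \<le> 1"
    "\<And>e. e \<in> sd_edges D \<Longrightarrow> sd_kind D (fst (sd_head D e)) \<noteq> Merge \<Longrightarrow> snd (sd_head D e) = 0"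
    "inj_on (sd_tail D) (sd_edges D)" "inj_on (sd_head D) (sd_edges D)"
    "\<And>v. v \<in> sd_verts D \<Longrightarrow> \<exists>e\<in>sd_edges D. fst (sd_tail D e) = v"
  using assms unfolding wf_sd_def by blast+

lemma trajectory_append:
  "trajectory D xs \<Longrightarrow> trajectory D ys \<Longrightarrow> flows D (last xs) (hd ys) \<Longrightarrow> trajectory D (xs @ ys)"
  unfolding trajectory_def by (auto simp: successively_append_iff)

lemma trajectory_snoc:
  "trajectory D (xs @ [q]) \<Longrightarrow> xs \<noteq> [] \<Longrightarrow>
    trajectory D xs \<and> flows D (last xs) q \<and> fst q \<in> sd_edges D \<and> 0 \<le> snd q \<and> snd q < 1"
  unfolding trajectory_def by (auto simp: successively_append_iff)

lemma trajectory_concat: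
  assumes "xs \<noteq> []" "\<forall>p\<in>set xs. trajectory D (f p)"
    "successively (\<lambda>p q. flows D (last (f p)) (hd (f q))) xs"
  shows "trajectory D (concat (map f xs))"
  using assms
proof (induction xs rule: induct_list012)
  case (3 p q xs)
  have "f q \<noteq> []" using "3.prems" by (simp add: trajectory_def)
  then show ?case using "3" trajectory_append[of D "f p" "concat (map f (q # xs))"] by simp
qed simp_all

lemma red_sum_concat: "red_sum D (concat xs) = sum_list (map (red_sum D) xs)"
  by (induction xs) (auto simp: red_sum_def)

lemma blue_sum_concat: "blue_sum D (concat xs) = sum_list (map (blue_sum D) xs)"
  by (induction xs) (auto simp: blue_sum_def)

section \<open>Rule I\<close>

locale ruleI_step =
  fixes D :: sd and es :: "eid list" and m s :: vid and P :: "vid set"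
    and x1 x2 z1 z2 :: eid and a1 b1 a2 b2 :: vid and f1 f2 :: eid and red_y blue_y :: nat and D' :: sd
  assumes ms: "ms_strand D es"
    and m_def: "m = fst (sd_tail D (hd es))" and s_def: "s = fst (sd_head D (last es))"
    and P_def: "P = set (map (\<lambda>e. fst (sd_head D e)) (butlast es))"
    and x1: "x1 \<in> sd_edges D" "sd_head D x1 = (m, 0)"
    and x2: "x2 \<in> sd_edges D" "sd_head D x2 = (m, 1)"
    and z1: "z1 \<in> sd_edges D" "sd_tail D z1 = (s, 0)"
    and z2: "z2 \<in> sd_edges D" "sd_tail D z2 = (s, 1)"
    and new_distinct: "distinct [a1, b1, a2, b2]" and fresh: "{a1, b1, a2, b2} \<inter> sd_verts D = {}"
    and f12: "f1 \<noteq> f2" "f1 \<notin> sd_edges D" "f2 \<notin> sd_edges D"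
    and red_y_def: "red_y = sum_list (map (sd_red D) es)"
    and blue_y_def: "blue_y = sum_list (map (sd_blue D) es)"
    and D'_def: "D' = \<lparr> sd_verts = (sd_verts D - ({m, s} \<union> P)) \<union> {a1, b1, a2, b2},
            sd_kind = (sd_kind D)(a1 := Pass, b1 := Pass, a2 := Pass, b2 := Pass),
            sd_edges = (sd_edges D - set es) \<union> {f1, f2},
            sd_tail = (sd_tail D)(z1 := (b1, 0), z2 := (b2, 0), f1 := (a1, 0), f2 := (a2, 0)),
            sd_head = (sd_head D)(x1 := (a1, 0), x2 := (a2, 0), f1 := (b1, 0), f2 := (b2, 0)),
            sd_red = (sd_red D)(f1 := red_y, f2 := red_y),
            sd_blue = (sd_blue D)(f1 := blue_y, f2 := blue_y) \<rparr>"
    and wf_D: "wf_sd D"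
begin

abbreviation "V \<equiv> sd_verts D"
abbreviation "E \<equiv> sd_edges D"
abbreviation "tail \<equiv> sd_tail D"
abbreviation "head \<equiv> sd_head D"
abbreviation "kind \<equiv> sd_kind D"

lemma D'_simps:
  "sd_verts D' = (V - ({m, s} \<union> P)) \<union> {a1, b1, a2, b2}"
  "sd_kind D' = kind(a1 := Pass, b1 := Pass, a2 := Pass, b2 := Pass)"
  "sd_edges D' = (E - set es) \<union> {f1, f2}"
  "sd_tail D' = tail(z1 := (b1, 0), z2 := (b2, 0), f1 := (a1, 0), f2 := (a2, 0))"
  "sd_head D' = head(x1 := (a1, 0), x2 := (a2, 0), f1 := (b1, 0), f2 := (b2, 0))"
  "sd_red D' = (sd_red D)(f1 := red_y, f2 := red_y)"
  "sd_blue D' = (sd_blue D)(f1 := blue_y, f2 := blue_y)"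
  by (simp_all add: D'_def)

lemma es_not_Nil: "es \<noteq> []" and set_es_subset: "set es \<subseteq> E"
  using ms unfolding ms_strand_def by simp_all

lemma m_Merge: "m \<in> V" "kind m = Merge" and s_Split: "s \<in> V" "kind s = Split"
  using ms m_def s_def unfolding ms_strand_def by auto

lemma es_link:
  "Suc j < length es \<Longrightarrow> fst (head (es ! j)) = fst (tail (es ! Suc j))
     \<and> fst (head (es ! j)) \<in> V \<and> kind (fst (head (es ! j))) = Pass"
  using ms unfolding ms_strand_def by blast

lemma es_head_kind:
  assumes "j < length es"
  shows "kind (fst (head (es ! j))) \<in> {Pass, Split}"
proof (cases "Suc j < length es")
  case False
  then have "j = length es - 1" using assms by simp
  then show ?thesis using s_Split s_def es_not_Nil by (simp add: last_conv_nth)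
next
  case True
  then show ?thesis using es_link[of j] by (metis insertI1)
qed

lemma es_tail_kind:
  assumes "j < length es"
  shows "kind (fst (tail (es ! j))) \<in> {Pass, Merge}"
proof (cases j)
  case 0
  then show ?thesis using m_Merge m_def es_not_Nil by (simp add: hd_conv_nth)
next
  case (Suc i)
  then show ?thesis using es_link[of i] assms by (metis insertI1)
qed

lemma es_ports: "e \<in> set es \<Longrightarrow> snd (head e) = 0 \<and> snd (tail e) = 0"
  using es_head_kind es_tail_kind wf_sdD(7,9)[OF wf_D] set_es_subset
  by (fastforce simp: in_set_conv_nth)

lemma x_notin_es: "x1 \<notin> set es" "x2 \<notin> set es"
  using es_head_kind x1 x2 m_Merge by (fastforce simp: in_set_conv_nth)+

lemma z_notin_es: "z1 \<notin> set es" "z2 \<notin> set es"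
  using es_tail_kind z1 z2 s_Split by (fastforce simp: in_set_conv_nth)+

lemma new_edges_distinct:
  "x1 \<noteq> x2" "z1 \<noteq> z2" "f1 \<noteq> z1" "f1 \<noteq> z2" "f2 \<noteq> z1" "f2 \<noteq> z2"
  "f1 \<noteq> x1" "f1 \<noteq> x2" "f2 \<noteq> x1" "f2 \<noteq> x2"
  using f12 z1 z2 x1 x2 by auto

lemma new_verts_notin: "a1 \<notin> V" "b1 \<notin> V" "a2 \<notin> V" "b2 \<notin> V"
  using fresh by auto

lemma inner_vertex: "v \<in> P \<Longrightarrow> \<exists>j. Suc j < length es \<and> v = fst (head (es ! j))"
proof -
  assume "v \<in> P"
  then obtain i where "i < length (butlast es)" "v = fst (head (butlast es ! i))"
    unfolding P_def by (auto simp: in_set_conv_nth)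
  then show ?thesis by (intro exI[of _ i]) (auto simp: nth_butlast)
qed

lemma es_tail_removed: "e \<in> set es \<Longrightarrow> fst (tail e) \<in> {m} \<union> P"
proof -
  assume "e \<in> set es"
  then obtain j where j: "j < length es" "es ! j = e" by (auto simp: in_set_conv_nth)
  show ?thesis
  proof (cases j)
    case 0
    then show ?thesis using j m_def es_not_Nil by (simp add: hd_conv_nth)
  next
    case (Suc i)
    then have "es ! i \<in> set (butlast es)" "fst (head (es ! i)) = fst (tail e)"
      using j es_link[of i] by (auto simp: in_set_conv_nth nth_butlast intro: exI[of _ i])
    then show ?thesis unfolding P_def by force
  qed
qed

lemma tail_not_removed:
  assumes "e \<in> E" "e \<notin> set es" "e \<noteq> z1" "e \<noteq> z2"
  shows "fst (tail e) \<notin> {m, s} \<union> P"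
proof
  assume removed: "fst (tail e) \<in> {m, s} \<union> P"
  have same_tail: "e = e'" if "e' \<in> E" "tail e = tail e'" for e'
    using wf_sdD(10)[OF wf_D] assms(1) that by (simp add: inj_on_eq_iff)
  have "\<exists>e' \<in> set es \<union> {z1, z2}. tail e = tail e'"
  proof -
    consider "fst (tail e) = m" | "fst (tail e) = s" | j where "Suc j < length es" "fst (tail e) = fst (head (es ! j))"
      using removed inner_vertex by blast
    then show ?thesis
    proof cases
      case 1
      then have "tail e = tail (hd es)"
        using wf_sdD(7)[OF wf_D assms(1)] m_Merge es_ports[of "hd es"] es_not_Nil m_def
        by (simp add: prod_eq_iff)
      then show ?thesis using es_not_Nil by auto
    next
      case 2
      then have "tail e = tail z1 \<or> tail e = tail z2"
        using wf_sdD(6)[OF wf_D assms(1)] z1 z2 by (simp add: prod_eq_iff le_Suc_eq)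
      then show ?thesis by blast
    next
      case (3 j)
      then have "kind (fst (tail e)) = Pass" using es_link[of j] by metis
      then have "tail e = tail (es ! Suc j)"
        using 3 es_link[of j] wf_sdD(7)[OF wf_D assms(1)] es_ports[of "es ! Suc j"] by (simp add: prod_eq_iff)
      then show ?thesis using 3 by (metis UnI1 nth_mem)
    qed
  qed
  then show False using same_tail assms z1 z2 set_es_subset by blast
qed

lemma head_not_removed:
  assumes "e \<in> E" "e \<notin> set es" "e \<noteq> x1" "e \<noteq> x2"
  shows "fst (head e) \<notin> {m, s} \<union> P"
proof
  assume removed: "fst (head e) \<in> {m, s} \<union> P"
  have same_head: "e = e'" if "e' \<in> E" "head e = head e'" for e'
    using wf_sdD(11)[OF wf_D] assms(1) that by (simp add: inj_on_eq_iff)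
  have "\<exists>e' \<in> set es \<union> {x1, x2}. head e = head e'"
  proof -
    consider "fst (head e) = m" | "fst (head e) = s" | j where "Suc j < length es" "fst (head e) = fst (head (es ! j))"
      using removed inner_vertex by blast
    then show ?thesis
    proof cases
      case 1
      then have "head e = head x1 \<or> head e = head x2"
        using wf_sdD(8)[OF wf_D assms(1)] x1 x2 by (simp add: prod_eq_iff le_Suc_eq)
      then show ?thesis by blast
    next
      case 2
      then have "head e = head (last es)"
        using wf_sdD(9)[OF wf_D assms(1)] s_Split es_ports[of "last es"] es_not_Nil s_def
        by (simp add: prod_eq_iff)
      then show ?thesis using es_not_Nil by auto
    next
      case (3 j)
      then have "kind (fst (head e)) = Pass" using es_link[of j] by metis
      then have "head e = head (es ! j)"
        using 3 wf_sdD(9)[OF wf_D assms(1)] es_ports[of "es ! j"] by (simp add: prod_eq_iff)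
      then show ?thesis using 3 by (metis Suc_lessD UnI1 nth_mem)
    qed
  qed
  then show False using same_head assms x1 x2 set_es_subset by blast
qed

lemma tail'_cases:
  "e \<in> sd_edges D' \<Longrightarrow> (e = f1 \<and> sd_tail D' e = (a1, 0)) \<or> (e = f2 \<and> sd_tail D' e = (a2, 0))
     \<or> (e = z1 \<and> sd_tail D' e = (b1, 0)) \<or> (e = z2 \<and> sd_tail D' e = (b2, 0))
     \<or> (e \<in> E \<and> e \<notin> set es \<and> e \<noteq> z1 \<and> e \<noteq> z2 \<and> sd_tail D' e = tail e)"
  using new_edges_distinct f12 by (auto simp: D'_simps)

lemma head'_cases:
  "e \<in> sd_edges D' \<Longrightarrow> (e = f1 \<and> sd_head D' e = (b1, 0)) \<or> (e = f2 \<and> sd_head D' e = (b2, 0))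
     \<or> (e = x1 \<and> sd_head D' e = (a1, 0)) \<or> (e = x2 \<and> sd_head D' e = (a2, 0))
     \<or> (e \<in> E \<and> e \<notin> set es \<and> e \<noteq> x1 \<and> e \<noteq> x2 \<and> sd_head D' e = head e)"
  using new_edges_distinct f12 by (auto simp: D'_simps)

lemma kind'_old: "v \<in> V \<Longrightarrow> sd_kind D' v = kind v"
  using new_verts_notin by (auto simp: D'_simps)

lemma kind'_new: "sd_kind D' a1 = Pass" "sd_kind D' b1 = Pass" "sd_kind D' a2 = Pass" "sd_kind D' b2 = Pass"
  by (auto simp: D'_simps)

lemma x_z_in_D': "x1 \<in> sd_edges D'" "x2 \<in> sd_edges D'" "z1 \<in> sd_edges D'" "z2 \<in> sd_edges D'"
  using x1 x2 z1 z2 x_notin_es z_notin_es by (auto simp: D'_simps)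

lemma endpoints_D':
  assumes "e \<in> sd_edges D'"
  shows "fst (sd_tail D' e) \<in> sd_verts D' \<and> fst (sd_head D' e) \<in> sd_verts D'"
proof
  show "fst (sd_tail D' e) \<in> sd_verts D'"
    using tail'_cases[OF assms] tail_not_removed[of e] wf_sdD(4)[OF wf_D, of e]
    unfolding D'_simps(1) by auto
  show "fst (sd_head D' e) \<in> sd_verts D'"
    using head'_cases[OF assms] head_not_removed[of e] wf_sdD(5)[OF wf_D, of e]
    unfolding D'_simps(1) by auto
qed

lemma ports_D':
  assumes "e \<in> sd_edges D'"
  shows "snd (sd_tail D' e) \<le> 1 \<and> (sd_kind D' (fst (sd_tail D' e)) \<noteq> Split \<longrightarrow> snd (sd_tail D' e) = 0)
    \<and> snd (sd_head D' e) \<le> 1 \<and> (sd_kind D' (fst (sd_head D' e)) \<noteq> Merge \<longrightarrow> snd (sd_head D' e) = 0)"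
proof (intro conjI)
  show "snd (sd_tail D' e) \<le> 1" "sd_kind D' (fst (sd_tail D' e)) \<noteq> Split \<longrightarrow> snd (sd_tail D' e) = 0"
    using tail'_cases[OF assms] wf_sdD(4,6,7)[OF wf_D, of e] kind'_old by auto
  show "snd (sd_head D' e) \<le> 1" "sd_kind D' (fst (sd_head D' e)) \<noteq> Merge \<longrightarrow> snd (sd_head D' e) = 0"
    using head'_cases[OF assms] wf_sdD(5,8,9)[OF wf_D, of e] kind'_old by auto
qed

lemma old_endpoints_not_new:
  "e \<in> E \<Longrightarrow> fst (tail e) \<notin> {a1, b1, a2, b2} \<and> fst (head e) \<notin> {a1, b1, a2, b2}"
  using wf_sdD(4,5)[OF wf_D, of e] fresh by blast

lemma inj_on_tail_D': "inj_on (sd_tail D') (sd_edges D')"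
proof -
  let ?new = "{f1, f2, z1, z2}" and ?old = "E - set es - {z1, z2}"
  have edges: "sd_edges D' = ?new \<union> ?old"
    using z1 z2 z_notin_es by (auto simp: D'_simps)
  have new: "sd_tail D' f1 = (a1, 0)" "sd_tail D' f2 = (a2, 0)" "sd_tail D' z1 = (b1, 0)" "sd_tail D' z2 = (b2, 0)"
    using new_edges_distinct f12 by (auto simp: D'_simps)
  have inj_new: "inj_on (sd_tail D') ?new"
    using new new_distinct by (auto simp: inj_on_def)
  have old: "sd_tail D' e = tail e" if "e \<in> ?old" for e
    using that f12 by (auto simp: D'_simps)
  have "inj_on tail ?old"
    using wf_sdD(10)[OF wf_D] by (rule inj_on_subset) blast
  then have "inj_on (sd_tail D') ?old"
    using old inj_on_cong[of ?old "sd_tail D'" tail] by blast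
  moreover note inj_new
  moreover have "sd_tail D' ` ?new \<inter> sd_tail D' ` ?old = {}"
    using new old old_endpoints_not_new by fastforce
  ultimately show ?thesis unfolding edges inj_on_Un by blast
qed

lemma inj_on_head_D': "inj_on (sd_head D') (sd_edges D')"
proof -
  let ?new = "{f1, f2, x1, x2}" and ?old = "E - set es - {x1, x2}"
  have edges: "sd_edges D' = ?new \<union> ?old"
    using x1 x2 x_notin_es by (auto simp: D'_simps)
  have new: "sd_head D' f1 = (b1, 0)" "sd_head D' f2 = (b2, 0)" "sd_head D' x1 = (a1, 0)" "sd_head D' x2 = (a2, 0)"
    using new_edges_distinct f12 by (auto simp: D'_simps)
  have inj_new: "inj_on (sd_head D') ?new"
    using new new_distinct by (auto simp: inj_on_def)
  have old: "sd_head D' e = head e" if "e \<in> ?old" for e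
    using that f12 by (auto simp: D'_simps)
  have "inj_on head ?old"
    using wf_sdD(11)[OF wf_D] by (rule inj_on_subset) blast
  then have "inj_on (sd_head D') ?old"
    using old inj_on_cong[of ?old "sd_head D'" head] by blast
  moreover note inj_new
  moreover have "sd_head D' ` ?new \<inter> sd_head D' ` ?old = {}"
    using new old old_endpoints_not_new by fastforce
  ultimately show ?thesis unfolding edges inj_on_Un by blast
qed

lemma out_edge_D': "v \<in> sd_verts D' \<Longrightarrow> \<exists>e\<in>sd_edges D'. fst (sd_tail D' e) = v"
proof -
  assume v: "v \<in> sd_verts D'"
  have new: "sd_tail D' f1 = (a1, 0)" "sd_tail D' f2 = (a2, 0)" "sd_tail D' z1 = (b1, 0)" "sd_tail D' z2 = (b2, 0)"
    using new_edges_distinct f12 by (auto simp: D'_simps)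
  have "f1 \<in> sd_edges D'" "f2 \<in> sd_edges D'" by (simp_all add: D'_simps(3))
  then have "\<exists>e\<in>sd_edges D'. fst (sd_tail D' e) = v" if "v \<in> {a1, a2, b1, b2}"
    using that new x_z_in_D' by (metis empty_iff fst_conv insert_iff)
  moreover have "\<exists>e\<in>sd_edges D'. fst (sd_tail D' e) = v" if old: "v \<in> V" "v \<notin> {m, s} \<union> P"
  proof -
    obtain e where e: "e \<in> E" "fst (tail e) = v" using wf_sdD(12)[OF wf_D] old(1) by blast
    then have "e \<notin> set es" "e \<noteq> z1" "e \<noteq> z2"
      using es_tail_removed old z1 z2 by auto
    then show ?thesis using e tail'_cases[of e] f12 by (intro bexI[of _ e]) (auto simp: D'_simps(3))
  qed
  ultimately show ?thesis using v unfolding D'_simps(1) by blast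
qed

lemma wf_sd_D': "wf_sd D'"
proof -
  have "finite (sd_verts D')" "finite (sd_edges D')" "sd_verts D' \<noteq> {}"
    using wf_sdD(1,2)[OF wf_D] by (simp_all add: D'_simps(1,3))
  then show ?thesis
    unfolding wf_sd_def using endpoints_D' ports_D' inj_on_tail_D' inj_on_head_D' out_edge_D' by blast
qed

end

context ruleI_step
begin

text \<open>A point at position t on the new piece f_i sits at position (t + i) / 2 on every piece
  of the deleted strand es, which it traverses between the ports i of m and s.\<close>
definition expand :: "eid \<times> real \<Rightarrow> (eid \<times> real) list" where
  "expand p = (if fst p = f1 then map (\<lambda>e. (e, snd p / 2)) es
     else if fst p = f2 then map (\<lambda>e. (e, (snd p + 1) / 2)) es else [p])"

lemma expand_not_Nil: "expand p \<noteq> []"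
  using es_not_Nil unfolding expand_def by auto

lemma red_sum_expand: "red_sum D (expand p) = sd_red D' (fst p)"
  and blue_sum_expand: "blue_sum D (expand p) = sd_blue D' (fst p)"
  unfolding expand_def red_sum_def blue_sum_def using f12
  by (auto simp: D'_simps red_y_def blue_y_def comp_def)

lemma flows_along_es: "successively (flows D) (map (\<lambda>e. (e, t)) es)"
proof -
  have "flow_step D (es ! j) t (es ! Suc j) t" if "Suc j < length es" for j
    using es_link[OF that] set_es_subset that unfolding flow_step_def by auto
  then show ?thesis by (simp add: successively_map successively_conv_nth)
qed

lemma trajectory_expand:
  assumes "fst p \<in> sd_edges D'" "0 \<le> snd p" "snd p < 1"
  shows "trajectory D (expand p)"
proof -
  have "trajectory D (map (\<lambda>e. (e, t)) es)" if "0 \<le> t" "t < 1" for t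
    using that flows_along_es es_not_Nil set_es_subset unfolding trajectory_def by auto
  moreover have "fst p \<in> E" if "fst p \<noteq> f1" "fst p \<noteq> f2"
    using assms that by (auto simp: D'_simps)
  ultimately show ?thesis
    using assms unfolding expand_def trajectory_def by auto
qed

lemma enter_es: "flow_step D x1 t (hd es) (t / 2)" "flow_step D x2 t (hd es) ((t + 1) / 2)"
  unfolding flow_step_def using x1 x2 m_def m_Merge set_es_subset es_not_Nil by auto

lemma exit_es: "flow_step D (last es) (t / 2) z1 t" "flow_step D (last es) ((t + 1) / 2) z2 t"
  unfolding flow_step_def using z1 z2 s_def s_Split set_es_subset es_not_Nil by auto

lemma tail'_new_vertex:
  assumes "e \<in> sd_edges D'"
  shows "fst (sd_tail D' e) = a1 \<Longrightarrow> e = f1" "fst (sd_tail D' e) = a2 \<Longrightarrow> e = f2"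
    "fst (sd_tail D' e) = b1 \<Longrightarrow> e = z1" "fst (sd_tail D' e) = b2 \<Longrightarrow> e = z2"
  using tail'_cases[OF assms] new_distinct old_endpoints_not_new[of e] by auto

lemma head'_new_vertex:
  assumes "e \<in> sd_edges D'"
  shows "fst (sd_head D' e) = a1 \<Longrightarrow> e = x1" "fst (sd_head D' e) = a2 \<Longrightarrow> e = x2"
    "fst (sd_head D' e) = b1 \<Longrightarrow> e = f1" "fst (sd_head D' e) = b2 \<Longrightarrow> e = f2"
  using head'_cases[OF assms] new_distinct old_endpoints_not_new[of e] by auto

lemma expand_old: "e \<noteq> f1 \<Longrightarrow> e \<noteq> f2 \<Longrightarrow> expand (e, t) = [(e, t)]"
  unfolding expand_def by simp

lemma expand_step_from_new:
  assumes step: "flow_step D' e t e' t'" and e: "e = f1 \<or> e = f2"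
  shows "flows D (last (expand (e, t))) (hd (expand (e', t')))"
proof -
  have e': "e' \<in> sd_edges D'" and link: "fst (sd_head D' e) = fst (sd_tail D' e')"
    and pass: "sd_kind D' (fst (sd_head D' e)) = Pass \<Longrightarrow> t' = t"
    using step unfolding flow_step_def by auto
  have heads: "sd_head D' f1 = (b1, 0)" "sd_head D' f2 = (b2, 0)"
    using new_edges_distinct f12 by (auto simp: D'_simps)
  from e show ?thesis
  proof
    assume "e = f1"
    then have "e' = z1" "t' = t" using link e' pass heads tail'_new_vertex(3) kind'_new by auto
    then show ?thesis
      using \<open>e = f1\<close> exit_es(1) es_not_Nil new_edges_distinct
      by (simp add: expand_def last_map)
  next
    assume "e = f2"
    then have "e' = z2" "t' = t" using link e' pass heads tail'_new_vertex(4) kind'_new by auto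
    then show ?thesis
      using \<open>e = f2\<close> exit_es(2) es_not_Nil new_edges_distinct f12
      by (simp add: expand_def last_map)
  qed
qed

lemma expand_step_into_new:
  assumes step: "flow_step D' e t e' t'" and e: "e \<noteq> f1" "e \<noteq> f2" and e': "e' = f1 \<or> e' = f2"
  shows "flows D (last (expand (e, t))) (hd (expand (e', t')))"
proof -
  have eD': "e \<in> sd_edges D'" and link: "fst (sd_head D' e) = fst (sd_tail D' e')"
    and pass: "sd_kind D' (fst (sd_head D' e)) = Pass \<Longrightarrow> t' = t"
    using step unfolding flow_step_def by auto
  have tails: "sd_tail D' f1 = (a1, 0)" "sd_tail D' f2 = (a2, 0)"
    using new_edges_distinct f12 by (auto simp: D'_simps)
  from e' show ?thesis
  proof
    assume "e' = f1"
    then have "e = x1" "t' = t" using link eD' pass tails head'_new_vertex(1) kind'_new by auto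
    then show ?thesis
      using \<open>e' = f1\<close> enter_es(1) es_not_Nil new_edges_distinct
      by (simp add: expand_def hd_map)
  next
    assume "e' = f2"
    then have "e = x2" "t' = t" using link eD' pass tails head'_new_vertex(2) kind'_new by auto
    then show ?thesis
      using \<open>e' = f2\<close> enter_es(2) es_not_Nil new_edges_distinct f12
      by (simp add: expand_def hd_map)
  qed
qed

lemma expand_step_old:
  assumes step: "flow_step D' e t e' t'" and "e \<noteq> f1" "e \<noteq> f2" "e' \<noteq> f1" "e' \<noteq> f2"
  shows "flows D (last (expand (e, t))) (hd (expand (e', t')))"
proof -
  define v where "v = fst (sd_head D' e)"
  have eD': "e \<in> sd_edges D'" "e' \<in> sd_edges D'" and link: "v = fst (sd_tail D' e')"
    using step unfolding flow_step_def v_def by auto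
  have "e \<noteq> x1" "e \<noteq> x2" "e' \<noteq> z1" "e' \<noteq> z2"
    using link assms(2-5) tail'_new_vertex[OF eD'(2)] head'_new_vertex[OF eD'(1)]
      head'_cases[OF eD'(1)] tail'_cases[OF eD'(2)] unfolding v_def by force+
  then have head_e: "sd_head D' e = head e" "e \<in> E" and tail_e': "sd_tail D' e' = tail e'" "e' \<in> E"
    using head'_cases[OF eD'(1)] tail'_cases[OF eD'(2)] assms(2-5) by auto
  have "v \<in> V" using head_e wf_sdD(5)[OF wf_D] unfolding v_def by simp
  then have "flow_step D e t e' t'"
    using step head_e tail_e' kind'_old unfolding flow_step_def v_def by auto
  then show ?thesis using assms by (simp add: expand_old)
qed

lemma expand_step:
  "flow_step D' e t e' t' \<Longrightarrow> flows D (last (expand (e, t))) (hd (expand (e', t')))"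
  using expand_step_from_new expand_step_into_new expand_step_old by blast

lemma trajectory_concat_expand:
  assumes "trajectory D' ss"
  shows "trajectory D (concat (map expand ss)) \<and> red_sum D (concat (map expand ss)) = red_sum D' ss
    \<and> blue_sum D (concat (map expand ss)) = blue_sum D' ss \<and> length ss \<le> length (concat (map expand ss))"
proof (intro conjI)
  have ss: "ss \<noteq> []" "\<forall>p\<in>set ss. fst p \<in> sd_edges D' \<and> 0 \<le> snd p \<and> snd p < 1" "successively (flows D') ss"
    using assms unfolding trajectory_def by auto
  have "successively (\<lambda>p q. flows D (last (expand p)) (hd (expand q))) ss"
    using ss(3) by (rule successively_mono) (metis expand_step prod.collapse)
  then show "trajectory D (concat (map expand ss))"
    using trajectory_concat[of ss D expand] ss trajectory_expand by auto
  show "red_sum D (concat (map expand ss)) = red_sum D' ss"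
    unfolding red_sum_concat map_map comp_def red_sum_expand by (simp add: red_sum_def)
  show "blue_sum D (concat (map expand ss)) = blue_sum D' ss"
    unfolding blue_sum_concat map_map comp_def blue_sum_expand by (simp add: blue_sum_def)
  have len: "1 \<le> length (expand p)" for p using expand_not_Nil[of p] by (cases "expand p") auto
  show "length ss \<le> length (concat (map expand ss))"
  proof (induction ss)
    case (Cons p ss)
    then show ?case using len[of p] by (simp; linarith)
  qed simp
qed

end

definition trajectories_lift :: "sd \<Rightarrow> sd \<Rightarrow> bool" where
  "trajectories_lift D D0 \<longleftrightarrow> (\<forall>ss. trajectory D ss \<longrightarrow> (\<exists>ss0. trajectory D0 ss0
     \<and> red_sum D0 ss0 = red_sum D ss \<and> blue_sum D0 ss0 = blue_sum D ss \<and> length ss \<le> length ss0))"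

lemma trajectories_lift_refl: "trajectories_lift D D"
  unfolding trajectories_lift_def by blast

lemma trajectories_lift_trans:
  assumes "trajectories_lift D D1" "trajectories_lift D1 D0"
  shows "trajectories_lift D D0"
  unfolding trajectories_lift_def
proof (intro allI impI)
  fix ss assume "trajectory D ss"
  then obtain ss1 where "trajectory D1 ss1" "red_sum D1 ss1 = red_sum D ss"
    "blue_sum D1 ss1 = blue_sum D ss" "length ss \<le> length ss1"
    using assms(1) unfolding trajectories_lift_def by blast
  moreover from this(1) obtain ss0 where "trajectory D0 ss0" "red_sum D0 ss0 = red_sum D1 ss1"
    "blue_sum D0 ss0 = blue_sum D1 ss1" "length ss1 \<le> length ss0"
    using assms(2) unfolding trajectories_lift_def by blast
  ultimately show "\<exists>ss0. trajectory D0 ss0 \<and> red_sum D0 ss0 = red_sum D ss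
      \<and> blue_sum D0 ss0 = blue_sum D ss \<and> length ss \<le> length ss0"
    by (intro exI[of _ ss0]) auto
qed

lemma ruleI_wf_sd_and_lift:
  assumes "ruleI D D'" "wf_sd D"
  shows "wf_sd D' \<and> trajectories_lift D' D"
  using assms(1)
proof (cases rule: ruleI.cases)
  case (1 es m s P x1 x2 z1 z2 a1 b1 a2 b2 f1 f2 ry bl)
  interpret ruleI_step D es m s P x1 x2 z1 z2 a1 b1 a2 b2 f1 f2 ry bl D'
    using 1 assms(2) by unfold_locales auto
  show ?thesis
    using wf_sd_D' trajectory_concat_expand unfolding trajectories_lift_def by blast
qed

lemma rtranclp_ruleI_wf_sd_and_lift:
  assumes "ruleI\<^sup>*\<^sup>* D0 D" "wf_sd D0"
  shows "wf_sd D \<and> trajectories_lift D D0"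
  using assms
proof (induction rule: rtranclp_induct)
  case base
  then show ?case by (simp add: trajectories_lift_refl)
next
  case (step D D')
  then show ?case using ruleI_wf_sd_and_lift trajectories_lift_trans by blast
qed

section \<open>Cycles in reduced diagrams\<close>

lemma mod_eq_window:
  fixes a b n :: nat
  assumes "a mod n = b mod n" "a \<le> b" "b < a + n"
  shows "a = b"
proof -
  have "n dvd b - a" using mod_eq_dvd_iff_nat[OF assms(2)] assms(1) by metis
  moreover have "b - a < n" using assms(2,3) by simp
  ultimately show ?thesis
    using assms(2) by (metis diff_is_0_eq' dvd_imp_le le_antisym not_less zero_less_diff)
qed

lemma funpow_repeats:
  assumes "finite A" "x \<in> A" "f ` A \<subseteq> A"
  obtains i j where "i < j" "(f ^^ i) x = (f ^^ j) x" "inj_on (\<lambda>p. (f ^^ p) x) {..<j}"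
proof -
  let ?w = "\<lambda>p. (f ^^ p) x"
  have in_A: "?w p \<in> A" for p by (induction p) (use assms in auto)
  have "\<not> inj_on ?w {..card A}"
  proof
    assume "inj_on ?w {..card A}"
    then have "card (?w ` {..card A}) = Suc (card A)" by (simp add: card_image)
    moreover have "card (?w ` {..card A}) \<le> card A" using in_A assms(1) by (intro card_mono) auto
    ultimately show False by simp
  qed
  then obtain p p' where "p \<noteq> p'" "?w p = ?w p'" unfolding inj_on_def by blast
  then have ex: "\<exists>j. \<exists>i<j. ?w i = ?w j" by (metis nat_neq_iff)
  define j where "j = (LEAST j. \<exists>i<j. ?w i = ?w j)"
  obtain i where "i < j" "?w i = ?w j" using LeastI_ex[OF ex] unfolding j_def by blast
  moreover have "inj_on ?w {..<j}"
  proof (rule inj_onI, rule ccontr)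
    fix p p' assume "p \<in> {..<j}" "p' \<in> {..<j}" and eq: "?w p = ?w p'" and "p \<noteq> p'"
    have "\<exists>i<max p p'. ?w i = ?w (max p p')"
    proof (cases "p < p'")
      case True
      then show ?thesis using eq by (intro exI[of _ p]) (simp add: max_def)
    next
      case False
      then show ?thesis using eq \<open>p \<noteq> p'\<close> by (intro exI[of _ p']) (simp add: max_def)
    qed
    then have "j \<le> max p p'" unfolding j_def by (rule Least_le)
    then show False using \<open>p \<in> {..<j}\<close> \<open>p' \<in> {..<j}\<close> by simp
  qed
  ultimately show ?thesis using that by blast
qed

lemma wf_sd_has_cycle:
  assumes "wf_sd D"
  shows "\<exists>cs. is_cycle D cs"
proof -
  obtain v0 where v0: "v0 \<in> sd_verts D" using wf_sdD(3)[OF assms] by blast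
  define out where "out v = (SOME e. e \<in> sd_edges D \<and> fst (sd_tail D e) = v)" for v
  have out: "v \<in> sd_verts D \<Longrightarrow> out v \<in> sd_edges D \<and> fst (sd_tail D (out v)) = v" for v
    unfolding out_def using wf_sdD(12)[OF assms] by (metis (mono_tags, lifting) someI_ex)
  define next_v where "next_v v = fst (sd_head D (out v))" for v
  have "next_v ` sd_verts D \<subseteq> sd_verts D"
    using out wf_sdD(5)[OF assms] unfolding next_v_def by auto
  then obtain i j where ij: "i < j" "(next_v ^^ i) v0 = (next_v ^^ j) v0"
      and inj: "inj_on (\<lambda>p. (next_v ^^ p) v0) {..<j}"
    using funpow_repeats[OF wf_sdD(1)[OF assms] v0] by blast
  let ?w = "\<lambda>p. (next_v ^^ p) v0"
  have wV: "?w p \<in> sd_verts D" for p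
    by (induction p) (use v0 out wf_sdD(5)[OF assms] in \<open>auto simp: next_v_def\<close>)
  have tail_out: "fst (sd_tail D (out (?w p))) = ?w p" for p using out wV by blast
  have head_out: "fst (sd_head D (out (?w p))) = ?w (Suc p)" for p by (simp add: next_v_def)
  define cs where "cs = map (\<lambda>p. out (?w p)) [i..<j]"
  have tails: "map (\<lambda>e. fst (sd_tail D e)) cs = map ?w [i..<j]"
    unfolding cs_def using tail_out by simp
  have "is_cycle D cs" unfolding is_cycle_def
  proof (intro conjI allI impI)
    show "cs \<noteq> []" "set cs \<subseteq> sd_edges D" unfolding cs_def using ij out wV by auto
    show "distinct (map (\<lambda>e. fst (sd_tail D e)) cs)"
      unfolding tails distinct_map using inj by (auto intro: inj_on_subset)
  next
    fix t assume t: "t < length cs"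
    have "(t + 1) mod length cs = (if i + t + 1 = j then 0 else t + 1)"
      using t unfolding cs_def by auto
    then show "fst (sd_head D (cs ! t)) = fst (sd_tail D (cs ! ((t + 1) mod length cs)))"
      using t ij head_out tail_out tail_out[of "Suc (i + t)"] unfolding cs_def by auto
  qed
  then show ?thesis by blast
qed

lemma sum_list_map_mod_length:
  fixes f :: "'a \<Rightarrow> nat"
  shows "sum_list (map (\<lambda>j. f (xs ! (j mod length xs))) [0..<m * length xs]) = m * sum_list (map f xs)"
proof (induction m)
  case (Suc m)
  let ?L = "length xs"
  have "Suc m * ?L = m * ?L + ?L" by simp
  then have "[0..<Suc m * ?L] = [0..<m * ?L] @ [m * ?L..<m * ?L + ?L]"
    by (metis upt_add_eq_append zero_le)
  moreover have "map (\<lambda>j. f (xs ! (j mod ?L))) [m * ?L..<m * ?L + ?L] = map f xs"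
    by (rule nth_equalityI) auto
  ultimately show ?case using Suc by simp
qed simp

locale reduced_cycle =
  fixes D :: sd and cs :: "eid list"
  assumes wf_D: "wf_sd D" and cycle: "is_cycle D cs" and reduced: "\<not> (\<exists>es. ms_strand D es)"
begin

abbreviation "L \<equiv> length cs"

definition cedge :: "nat \<Rightarrow> eid" where
  "cedge j = cs ! (j mod L)"

abbreviation "cvert j \<equiv> fst (sd_head D (cedge j))"
abbreviation "ckind j \<equiv> sd_kind D (cvert j)"

lemma L_pos: "0 < L"
  using cycle unfolding is_cycle_def by simp

lemma cedge_in_edges: "cedge j \<in> sd_edges D"
  using cycle L_pos unfolding is_cycle_def cedge_def by auto

lemma cedge_link: "cvert j = fst (sd_tail D (cedge (Suc j)))"
  using cycle L_pos unfolding is_cycle_def cedge_def by (simp add: mod_Suc_eq)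

lemma cvert_in_verts: "cvert j \<in> sd_verts D"
  using cedge_in_edges wf_sdD(5)[OF wf_D] by blast

lemma cedge_period: "cedge (j + i * L) = cedge j"
  unfolding cedge_def by simp

lemma cedge_inj_window: "cedge r1 = cedge r2 \<Longrightarrow> r1 \<le> r2 \<Longrightarrow> r2 < r1 + L \<Longrightarrow> r1 = r2"
proof -
  assume a: "cedge r1 = cedge r2" "r1 \<le> r2" "r2 < r1 + L"
  have "distinct cs" using cycle unfolding is_cycle_def by (auto simp: distinct_map)
  then have "r1 mod L = r2 mod L" using a(1) L_pos unfolding cedge_def by (simp add: nth_eq_iff_index_eq)
  then show ?thesis using mod_eq_window a(2,3) by blast
qed

lemma closest_merge_split:
  assumes "ckind i = Merge" "ckind j = Split"
  obtains q d where "0 < d" "d \<le> L" "ckind q = Merge" "ckind (q + d) = Split"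
    "\<And>r. 0 < r \<Longrightarrow> r < d \<Longrightarrow> ckind (q + r) = Pass"
proof -
  let ?pair = "\<lambda>d. 0 < d \<and> (\<exists>q. ckind q = Merge \<and> ckind (q + d) = Split)"
  have "Suc i * 1 \<le> Suc i * L" using L_pos by (intro mult_le_mono2) linarith
  then have big: "Suc i \<le> Suc i * L" by simp
  then have "i + (j + Suc i * L - i) = j + Suc i * L" by linarith
  then have "ckind (i + (j + Suc i * L - i)) = Split"
    using assms(2) cedge_period[of j "Suc i"] by simp
  then have ex: "?pair (j + Suc i * L - i)" using assms(1) big by (intro conjI exI[of _ i]) auto
  define d where "d = (LEAST d. ?pair d)"
  have d: "?pair d" unfolding d_def using ex by (rule LeastI)
  have least: "d \<le> d'" if "?pair d'" for d' unfolding d_def using that by (rule Least_le)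
  obtain q where q: "ckind q = Merge" "ckind (q + d) = Split" using d by blast
  have "d \<le> L"
  proof (rule ccontr)
    assume "\<not> d \<le> L"
    then have "ckind (q + (d - L)) = Split" using q(2) cedge_period[of "q + (d - L)" 1] by simp
    then have "d \<le> d - L" using least[of "d - L"] q(1) \<open>\<not> d \<le> L\<close> by auto
    then show False using L_pos \<open>\<not> d \<le> L\<close> by linarith
  qed
  moreover have "ckind (q + r) = Pass" if "0 < r" "r < d" for r
  proof (cases "ckind (q + r)")
    case Merge
    then have "ckind (q + r + (d - r)) = Split" using q(2) that by simp
    then have "?pair (d - r)" using Merge that by (intro conjI exI[of _ "q + r"]) auto
    then have "d \<le> d - r" by (rule least)
    then show ?thesis using that by linarith
  next
    case Split
    then show ?thesis using least[of r] q(1) that by auto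
  qed
  ultimately show ?thesis using that d q by blast
qed

lemma ms_strand_between:
  assumes "0 < d" "d \<le> L" "ckind q = Merge" "ckind (q + d) = Split"
    and pass: "\<And>r. 0 < r \<Longrightarrow> r < d \<Longrightarrow> ckind (q + r) = Pass"
  shows "ms_strand D (map cedge [Suc q..<Suc (q + d)])"
proof -
  let ?es = "map cedge [Suc q..<Suc (q + d)]"
  have nth: "?es ! r = cedge (Suc q + r)" "length ?es = d" if "r < d" for r
    using that by (simp_all del: upt_Suc)
  have "inj_on cedge {Suc q..<Suc (q + d)}"
  proof (rule inj_onI)
    fix r1 r2 assume "r1 \<in> {Suc q..<Suc (q + d)}" "r2 \<in> {Suc q..<Suc (q + d)}" "cedge r1 = cedge r2"
    then show "r1 = r2"
      using cedge_inj_window[of r1 r2] cedge_inj_window[of r2 r1] assms(2) by (cases "r1 \<le> r2") auto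
  qed
  then have "distinct ?es" by (simp add: distinct_map del: upt_Suc)
  moreover have "hd ?es = cedge (Suc q)" "last ?es = cedge (q + d)"
    using nth assms(1) by (simp_all add: hd_conv_nth last_conv_nth del: upt_Suc)
  ultimately show ?thesis
    unfolding ms_strand_def using assms cedge_in_edges cedge_link cvert_in_verts wf_sdD(4)[OF wf_D] pass[of "Suc r" for r]
    by (auto simp del: upt_Suc simp: nth)
qed

lemma no_merge_or_no_split: "(\<forall>j. ckind j \<noteq> Merge) \<or> (\<forall>j. ckind j \<noteq> Split)"
  using closest_merge_split ms_strand_between reduced by metis

text \<open>Without splits the flow is deterministic forwards, without merges backwards; either way a
  point can be followed around the cycle as often as we like.\<close>
primrec forward_pos :: "nat \<Rightarrow> real" where
  "forward_pos 0 = 0"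
| "forward_pos (Suc j) =
    (if ckind j = Merge then (forward_pos j + real (snd (sd_head D (cedge j)))) / 2 else forward_pos j)"

primrec backward_pos :: "nat \<Rightarrow> nat \<Rightarrow> real" where
  "backward_pos i 0 = 0"
| "backward_pos i (Suc d) =
    (if ckind i = Split then (backward_pos (Suc i) d + real (snd (sd_tail D (cedge (Suc i))))) / 2
     else backward_pos (Suc i) d)"

lemma forward_pos_bounds: "0 \<le> forward_pos j \<and> forward_pos j < 1"
proof (induction j)
  case (Suc j)
  then show ?case using wf_sdD(8)[OF wf_D cedge_in_edges, of j] by auto
qed simp

lemma backward_pos_bounds: "0 \<le> backward_pos i d \<and> backward_pos i d < 1"
proof (induction d arbitrary: i)
  case (Suc d)
  have "real (snd (sd_tail D (cedge (Suc i)))) \<le> 1" using wf_sdD(6)[OF wf_D cedge_in_edges] by simp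
  then show ?case using Suc[of "Suc i"] by auto
qed simp

lemma trajectory_around_cycle:
  assumes "0 < N" "\<And>j. j < N \<Longrightarrow> 0 \<le> t j \<and> t j < 1"
    "\<And>j. Suc j < N \<Longrightarrow> flow_step D (cedge j) (t j) (cedge (Suc j)) (t (Suc j))"
  shows "trajectory D (map (\<lambda>j. (cedge j, t j)) [0..<N])"
  unfolding trajectory_def using assms cedge_in_edges
  by (auto simp: successively_map successively_conv_nth)

lemma cycle_trajectory:
  assumes "1 \<le> m"
  obtains ss where "trajectory D ss" "red_sum D ss = m * cycle_red D cs"
    "blue_sum D ss = m * cycle_blue D cs" "length ss = m * L"
proof -
  let ?N = "m * L"
  have N: "0 < ?N" using assms L_pos by simp
  obtain t where "trajectory D (map (\<lambda>j. (cedge j, t j)) [0..<?N])"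
  proof (cases "\<forall>j. ckind j \<noteq> Split")
    case True
    have "flow_step D (cedge j) (forward_pos j) (cedge (Suc j)) (forward_pos (Suc j))" for j
      unfolding flow_step_def using cedge_in_edges cedge_link cvert_in_verts True by auto
    then show ?thesis using that trajectory_around_cycle[OF N, of forward_pos] forward_pos_bounds by blast
  next
    case False
    then have no_merge: "ckind j \<noteq> Merge" for j using no_merge_or_no_split by blast
    define t where "t j = backward_pos j (?N - 1 - j)" for j
    have "flow_step D (cedge j) (t j) (cedge (Suc j)) (t (Suc j))" if "Suc j < ?N" for j
    proof -
      have "?N - 1 - j = Suc (?N - 1 - Suc j)" using that by simp
      then have "t j = (if ckind j = Split then (t (Suc j) + real (snd (sd_tail D (cedge (Suc j))))) / 2 else t (Suc j))"
        unfolding t_def by simp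
      then show ?thesis unfolding flow_step_def using cedge_in_edges cedge_link cvert_in_verts no_merge[of j] by auto
    qed
    moreover have "0 \<le> t j \<and> t j < 1" for j unfolding t_def by (rule backward_pos_bounds)
    ultimately show ?thesis using that trajectory_around_cycle[OF N, of t] by blast
  qed
  moreover have "red_sum D (map (\<lambda>j. (cedge j, t j)) [0..<?N]) = m * cycle_red D cs"
    unfolding red_sum_def cycle_red_def map_map comp_def cedge_def
    using sum_list_map_mod_length[of "sd_red D" cs m] by simp
  moreover have "blue_sum D (map (\<lambda>j. (cedge j, t j)) [0..<?N]) = m * cycle_blue D cs"
    unfolding blue_sum_def cycle_blue_def map_map comp_def cedge_def
    using sum_list_map_mod_length[of "sd_blue D" cs m] by simp
  ultimately show ?thesis using that by simp
qed

lemma cycle_red_pos: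
  assumes "\<And>ss. trajectory D ss \<Longrightarrow> red_sum D ss = 0 \<Longrightarrow> length ss \<le> K"
  shows "1 \<le> cycle_red D cs"
proof (rule ccontr)
  assume "\<not> 1 \<le> cycle_red D cs"
  moreover obtain ss where "trajectory D ss" "red_sum D ss = (K + 1) * cycle_red D cs"
    "length ss = (K + 1) * L"
    using cycle_trajectory[of "K + 1"] by auto
  moreover have "(K + 1) * 1 \<le> (K + 1) * L" using L_pos by (intro mult_le_mono2) linarith
  ultimately show False using assms by fastforce
qed

lemma LIMSEQ_cycle_ratio:
  fixes g :: "real \<Rightarrow> real" and C M :: real
  assumes red: "1 \<le> cycle_red D cs"
    and tracks: "\<And>ss. trajectory D ss \<Longrightarrow> \<bar>(g ^^ red_sum D ss) 0 - real (blue_sum D ss)\<bar> \<le> C"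
    and displacement: "\<And>N x. \<bar>(g ^^ N) x - x\<bar> \<le> M * real N"
  shows "(\<lambda>N. (g ^^ N) 0 / real N) \<longlonglongrightarrow> real (cycle_blue D cs) / real (cycle_red D cs)"
proof (rule LIMSEQ_funpow_div[OF red _ displacement])
  fix m :: nat
  show "\<bar>(g ^^ (m * cycle_red D cs)) 0 - real (m * cycle_blue D cs)\<bar> \<le> C"
  proof (cases "m = 0")
    case True
    then show ?thesis using tracks[of "[(cedge 0, 0)]"] trajectory_around_cycle[of 1 "\<lambda>_. 0"] by simp
  next
    case False
    then obtain ss where "trajectory D ss" "red_sum D ss = m * cycle_red D cs"
      "blue_sum D ss = m * cycle_blue D cs"
      using cycle_trajectory[of m] by auto
    then show ?thesis using tracks by metis
  qed
qed

end

section \<open>The initial diagram\<close>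

definition into_Tm :: "bool list \<Rightarrow> eid" where
  "into_Tm w = (if w = [] then ER else EM w)"

definition out_of_Tp :: "bool list \<Rightarrow> eid" where
  "out_of_Tp w = (if w = [] then ER else EP w)"

lemma butlast_last_eqI:
  "w \<noteq> [] \<Longrightarrow> w' \<noteq> [] \<Longrightarrow> butlast w = butlast w' \<Longrightarrow> last w = last w' \<Longrightarrow> w = w'"
  by (metis append_butlast_last_id)

lemma successively_less_length_le:
  fixes f :: "'a \<Rightarrow> nat"
  assumes "successively (\<lambda>x y. f x < f y) xs" "\<forall>x\<in>set xs. f x \<le> B"
  shows "length xs \<le> Suc B"
proof -
  have "successively (<) (map f xs)" using assms(1) by (simp add: successively_map)
  then have "sorted_wrt (<) (map f xs)"
    using successively_conv_sorted_wrt[of "(<) :: nat \<Rightarrow> _"] by (simp add: transp_on_less)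
  then have "length xs = card (set (map f xs))" by (metis distinct_card length_map strict_sorted_iff)
  also have "\<dots> \<le> card {..B}" using assms(2) by (intro card_mono) auto
  finally show ?thesis by simp
qed

lemma inj_port: "inj port"
  by (auto simp: inj_def port_def split: if_splits)

context tree_pair_element
begin

abbreviation "D0 \<equiv> init_sd Tm Tp k"
abbreviation "lm \<equiv> leafaddrs Tm"
abbreviation "lp \<equiv> leafaddrs Tp"

lemma init_sd_simps:
  "sd_verts D0 = VM ` nodes Tm \<union> VP ` nodes Tp"
  "sd_edges D0 = EM ` (nodes Tm - {[]}) \<union> EP ` (nodes Tp - {[]}) \<union> EJ ` {1..n} \<union> {ER}"
  "sd_kind D0 (VM w) = (if w \<in> set lm then Pass else Split)"
  "sd_kind D0 (VP w) = (if w \<in> set lp then Pass else Merge)"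
  "sd_tail D0 (EM w) = (VM (butlast w), port (last w))"
  "sd_tail D0 (EP w) = (VP w, 0)"
  "sd_tail D0 ER = (VP [], 0)"
  "sd_head D0 (EM w) = (VM w, 0)"
  "sd_head D0 (EP w) = (VP (butlast w), port (last w))"
  "sd_head D0 ER = (VM [], 0)"
  "sd_red D0 e = (if e = ER then 1 else 0)"
  "sd_blue D0 (EM w) = 0" "sd_blue D0 (EP w) = 0" "sd_blue D0 ER = 0"
  by (simp_all add: init_sd_def Let_def nleaves_Tm)

lemma junction_simps:
  "sd_tail D0 (EJ (Suc j)) = (VM (lm ! j), 0)"
  "sd_head D0 (EJ (Suc j)) = (VP (lp ! ((j + k) mod n)), 0)"
  "sd_blue D0 (EJ (Suc j)) = (if n < j + 1 + k then 1 else 0)"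
  by (simp_all add: init_sd_def Let_def nleaves_Tm sigma_def)

lemma target_eq_iff: "j < n \<Longrightarrow> j' < n \<Longrightarrow> (j + k) mod n = (j' + k) mod n \<longleftrightarrow> j = j'"
  using mod_eq_window[of "j + k" n "j' + k"] mod_eq_window[of "j' + k" n "j + k"] by (cases "j \<le> j'") auto

lemma leaf_Tm: "j < n \<Longrightarrow> lm ! j \<in> set lm \<and> lm ! j \<in> nodes Tm"
  using nleaves_Tm set_leafaddrs_subset_nodes[of Tm] by auto

lemma leaf_TmD: "lm ! j = v \<Longrightarrow> j < n \<Longrightarrow> v \<in> set lm" "v = lm ! j \<Longrightarrow> j < n \<Longrightarrow> v \<in> set lm"
  using leaf_Tm by auto

lemma leaf_Tp: "lp ! ((j + k) mod n) \<in> set lp \<and> lp ! ((j + k) mod n) \<in> nodes Tp"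
  using nleaves_Tp set_leafaddrs_subset_nodes[of Tp] target_less[of j] by auto

lemma leaf_TpD: "lp ! ((j + k) mod n) = v \<Longrightarrow> v \<in> set lp" "v = lp ! ((j + k) mod n) \<Longrightarrow> v \<in> set lp"
  using leaf_Tp by auto

lemma leaf_Tm_eq_iff: "j < n \<Longrightarrow> j' < n \<Longrightarrow> lm ! j = lm ! j' \<longleftrightarrow> j = j'"
  using nth_eq_iff_index_eq[OF distinct_leafaddrs, of j Tm j'] nleaves_Tm by auto

lemma leaf_Tp_eq_iff: "j < n \<Longrightarrow> j' < n \<Longrightarrow> lp ! ((j + k) mod n) = lp ! ((j' + k) mod n) \<longleftrightarrow> j = j'"
  using nth_eq_iff_index_eq[OF distinct_leafaddrs, of "(j + k) mod n" Tp "(j' + k) mod n"] nleaves_Tp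
    target_less target_eq_iff by auto

lemma init_edge_cases:
  assumes "e \<in> sd_edges D0"
  obtains (EM) w where "e = EM w" "w \<in> nodes Tm" "w \<noteq> []"
    | (EP) w where "e = EP w" "w \<in> nodes Tp" "w \<noteq> []"
    | (EJ) j where "e = EJ (Suc j)" "j < n"
    | (ER) "e = ER"
proof -
  have "EJ ` {1..n} = (\<lambda>j. EJ (Suc j)) ` {..<n}"
    by (metis image_Suc_lessThan image_image)
  then show ?thesis using assms that unfolding init_sd_simps by blast
qed

lemma init_endpoints:
  "e \<in> sd_edges D0 \<Longrightarrow> fst (sd_tail D0 e) \<in> sd_verts D0 \<and> fst (sd_head D0 e) \<in> sd_verts D0"
  by (erule init_edge_cases) (auto simp: init_sd_simps junction_simps leaf_Tm leaf_Tp dest: butlast_in_nodes)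

lemma init_ports:
  "e \<in> sd_edges D0 \<Longrightarrow> snd (sd_tail D0 e) \<le> 1 \<and> (sd_kind D0 (fst (sd_tail D0 e)) \<noteq> Split \<longrightarrow> snd (sd_tail D0 e) = 0)
    \<and> snd (sd_head D0 e) \<le> 1 \<and> (sd_kind D0 (fst (sd_head D0 e)) \<noteq> Merge \<longrightarrow> snd (sd_head D0 e) = 0)"
  by (erule init_edge_cases) (auto simp: init_sd_simps junction_simps port_def dest: butlast_in_nodes)

lemma inj_on_init_tail: "inj_on (sd_tail D0) (sd_edges D0)"
proof (rule inj_onI)
  fix e e' assume e: "e \<in> sd_edges D0" and e': "e' \<in> sd_edges D0" and eq: "sd_tail D0 e = sd_tail D0 e'"
  show "e = e'"
    using e e' eq
    by (elim init_edge_cases)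
      (auto simp: init_sd_simps junction_simps inj_eq[OF inj_port] leaf_Tm leaf_Tm_eq_iff
        dest: butlast_in_nodes leaf_TmD leaf_TpD intro: butlast_last_eqI)
qed

lemma inj_on_init_head: "inj_on (sd_head D0) (sd_edges D0)"
proof (rule inj_onI)
  fix e e' assume e: "e \<in> sd_edges D0" and e': "e' \<in> sd_edges D0" and eq: "sd_head D0 e = sd_head D0 e'"
  show "e = e'"
    using e e' eq
    by (elim init_edge_cases)
      (auto simp: init_sd_simps junction_simps inj_eq[OF inj_port] leaf_Tp leaf_Tp_eq_iff
        dest: butlast_in_nodes leaf_TmD leaf_TpD intro: butlast_last_eqI)
qed

lemma init_out_edge: "v \<in> sd_verts D0 \<Longrightarrow> \<exists>e\<in>sd_edges D0. fst (sd_tail D0 e) = v"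
proof -
  assume "v \<in> sd_verts D0"
  then consider w where "v = VM w" "w \<in> nodes Tm" "w \<in> set lm" | w where "v = VM w" "w \<in> nodes Tm" "w \<notin> set lm"
    | w where "v = VP w" "w \<in> nodes Tp"
    by (auto simp: init_sd_simps)
  then show ?thesis
  proof cases
    case 1
    then obtain j where "j < n" "lm ! j = w" using nleaves_Tm by (auto simp: in_set_conv_nth)
    then show ?thesis using 1 by (intro bexI[of _ "EJ (Suc j)"]) (auto simp: init_sd_simps junction_simps)
  next
    case 2
    then have "w @ [False] \<in> nodes Tm" using snoc_in_nodesI by blast
    then show ?thesis using 2 by (intro bexI[of _ "EM (w @ [False])"]) (auto simp: init_sd_simps)
  next
    case 3
    then show ?thesis by (intro bexI[of _ "out_of_Tp w"]) (auto simp: init_sd_simps out_of_Tp_def)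
  qed
qed

lemma wf_sd_init: "wf_sd D0"
proof -
  have "VM [] \<in> sd_verts D0" by (simp add: init_sd_simps)
  moreover have "finite (sd_verts D0)" "finite (sd_edges D0)"
    using finite_nodes by (auto simp: init_sd_simps)
  ultimately show ?thesis
    unfolding wf_sd_def using init_endpoints init_ports inj_on_init_tail inj_on_init_head init_out_edge
    by blast
qed

lemma init_head_cases:
  assumes "e \<in> sd_edges D0"
  obtains (Tm) w where "w \<in> nodes Tm" "e = into_Tm w" "sd_head D0 e = (VM w, 0)"
    | (junction) j where "j < n" "e = EJ (Suc j)" "sd_head D0 e = (VP (lp ! ((j + k) mod n)), 0)"
    | (Tp) w b where "w @ [b] \<in> nodes Tp" "e = EP (w @ [b])" "sd_head D0 e = (VP w, port b)"
  using assms
proof (cases rule: init_edge_cases)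
  case (EP w)
  then show ?thesis using Tp[of "butlast w" "last w"] by (simp add: init_sd_simps)
qed (simp_all add: that into_Tm_def init_sd_simps junction_simps)

lemma init_tail_cases:
  assumes "e \<in> sd_edges D0"
  obtains (Tm) w b where "w @ [b] \<in> nodes Tm" "e = EM (w @ [b])" "sd_tail D0 e = (VM w, port b)"
    | (junction) j where "j < n" "e = EJ (Suc j)" "sd_tail D0 e = (VM (lm ! j), 0)"
    | (Tp) w where "w \<in> nodes Tp" "e = out_of_Tp w" "sd_tail D0 e = (VP w, 0)"
  using assms
proof (cases rule: init_edge_cases)
  case (EM w)
  then show ?thesis using Tm[of "butlast w" "last w"] by (simp add: init_sd_simps)
qed (simp_all add: that out_of_Tp_def init_sd_simps junction_simps)

lemma init_flow_step_cases:
  assumes step: "flow_step D0 e t e' t'"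
  obtains (split) w b where "e = into_Tm w" "e' = EM (w @ [b])" "w @ [b] \<in> nodes Tm"
      "t = (t' + real (port b)) / 2"
    | (leaf) j where "j < n" "e = into_Tm (lm ! j)" "e' = EJ (Suc j)" "t' = t"
    | (junction) j where "j < n" "e = EJ (Suc j)" "e' = out_of_Tp (lp ! ((j + k) mod n))" "t' = t"
    | (merge) w b where "e = EP (w @ [b])" "w @ [b] \<in> nodes Tp" "e' = out_of_Tp w"
      "t' = (t + real (port b)) / 2"
proof -
  have e: "e \<in> sd_edges D0" and e': "e' \<in> sd_edges D0"
    and link: "fst (sd_head D0 e) = fst (sd_tail D0 e')"
    and pass: "sd_kind D0 (fst (sd_head D0 e)) = Pass \<Longrightarrow> t' = t"
    and merge: "sd_kind D0 (fst (sd_head D0 e)) = Merge \<Longrightarrow> t' = (t + real (snd (sd_head D0 e))) / 2"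
    and split: "sd_kind D0 (fst (sd_head D0 e)) = Split \<Longrightarrow> t = (t' + real (snd (sd_tail D0 e'))) / 2"
    using step unfolding flow_step_def by auto
  from e show ?thesis
  proof (cases rule: init_head_cases)
    case (Tm w)
    from e' show ?thesis
    proof (cases rule: init_tail_cases)
      case (Tm v b)
      then show ?thesis
        using that(1) \<open>e = into_Tm w\<close> link split snoc_in_nodesD[of v b Tm] \<open>sd_head D0 e = (VM w, 0)\<close>
        by (simp add: init_sd_simps)
    next
      case (junction j)
      then show ?thesis
        using that(2) \<open>e = into_Tm w\<close> link pass leaf_Tm[of j] \<open>sd_head D0 e = (VM w, 0)\<close>
        by (simp add: init_sd_simps)
    qed (use link \<open>sd_head D0 e = (VM w, 0)\<close> in simp)
  next
    case (junction j)
    from e' show ?thesis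
      by (cases rule: init_tail_cases)
        (use that(3) junction link pass leaf_Tp[of j] in \<open>simp_all add: init_sd_simps\<close>)
  next
    case (Tp w b)
    from e' show ?thesis
      by (cases rule: init_tail_cases)
        (use that(4) Tp link merge snoc_in_nodesD[of w b Tp] in \<open>simp_all add: init_sd_simps\<close>)
  qed
qed

text \<open>The point at relative position t of an edge of the initial diagram lies at edge_pos e t
  on the circle: a tree edge carries the dyadic interval of its lower node, the junction edge
  j + 1 the j-th leaf interval of T_-, and the root edge all of [0, 1].\<close>
definition edge_pos :: "eid \<Rightarrow> real \<Rightarrow> real" where
  "edge_pos e t = (case e of
       EM w \<Rightarrow> interval_point (dyadic_int w 0 1) t
     | EP w \<Rightarrow> interval_point (dyadic_int w 0 1) t
     | EJ i \<Rightarrow> interval_point (dyadic_int (lm ! (i - 1)) 0 1) t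
     | ER \<Rightarrow> t
     | EF _ \<Rightarrow> 0)"

lemma edge_pos_simps [simp]:
  "edge_pos (EM w) t = interval_point (dyadic_int w 0 1) t"
  "edge_pos (EP w) t = interval_point (dyadic_int w 0 1) t"
  "edge_pos (EJ (Suc j)) t = interval_point (dyadic_int (lm ! j) 0 1) t"
  "edge_pos ER t = t"
  by (simp_all add: edge_pos_def)

definition is_junction :: "eid \<Rightarrow> bool" where
  "is_junction e \<longleftrightarrow> (\<exists>i. e = EJ i)"

lemma edge_pos_into_Tm: "edge_pos (into_Tm w) t = interval_point (dyadic_int w 0 1) t"
  and edge_pos_out_of_Tp: "edge_pos (out_of_Tp w) t = interval_point (dyadic_int w 0 1) t"
  by (simp_all add: into_Tm_def out_of_Tp_def interval_point_def)

lemma edge_pos_bounds: "0 \<le> t \<Longrightarrow> t < 1 \<Longrightarrow> 0 \<le> edge_pos e t \<and> edge_pos e t < 1"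
  using interval_point_dyadic_int_bounds[of 0 1 t] by (cases e) (simp_all add: edge_pos_def)

lemma into_Tm_not_junction: "\<not> is_junction (into_Tm w)" "sd_blue D0 (into_Tm w) = 0"
  by (simp_all add: into_Tm_def is_junction_def init_sd_simps)

lemma edge_pos_step:
  assumes "flow_step D0 e t e' t'" "0 \<le> t" "t < 1"
  shows "edge_pos e' t' + real (sd_blue D0 e) = (if is_junction e then ghat (edge_pos e t) else edge_pos e t)"
  using assms(1)
proof (cases rule: init_flow_step_cases)
  case (split w b)
  then have "(t' + real (port b)) / 2 = t" by simp
  with split show ?thesis
    by (simp add: edge_pos_into_Tm into_Tm_not_junction interval_point_snoc)
next
  case (leaf j)
  then show ?thesis
    by (simp add: edge_pos_into_Tm into_Tm_not_junction)
next
  case (junction j)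
  have I: "I ! j = dyadic_int (lm ! j) 0 1" and J: "J ! target j = dyadic_int (lp ! target j) 0 1"
    using junction nleaves_Tm nleaves_Tp target_less[of j] by (simp_all add: leafints_conv_dyadic_int)
  have "edge_pos e' t' + real (sd_blue D0 e) = interval_point (J ! target j) t + wraps j"
    using junction J by (simp add: edge_pos_out_of_Tp junction_simps)
  also have "\<dots> = gbase Tm Tp k (interval_point (I ! j) t)"
    using gbase_junction junction assms(2,3) by simp
  also have "\<dots> = ghat (edge_pos e t)"
    using junction I edge_pos_bounds[OF assms(2,3), of e] by (simp add: ghat_eq_gbase)
  finally show ?thesis using junction by (simp add: is_junction_def)
next
  case (merge w b)
  then have "(t + real (port b)) / 2 = t'" by simp
  with merge show ?thesis
    by (simp add: edge_pos_out_of_Tp interval_point_snoc init_sd_simps is_junction_def)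
qed

abbreviation "hmax \<equiv> max (height Tm) (height Tp)"

text \<open>Off the root edge a point descends T_-, crosses a junction and climbs T_+, so
  depth_rank strictly increases along it.\<close>
definition depth_rank :: "eid \<Rightarrow> nat" where
  "depth_rank e = (case e of EM w \<Rightarrow> length w | EJ _ \<Rightarrow> hmax + 1 | EP w \<Rightarrow> 2 * hmax + 2 - length w | _ \<Rightarrow> 0)"

lemma depth_rank_le: "e \<in> sd_edges D0 \<Longrightarrow> depth_rank e \<le> 2 * hmax + 2"
  by (erule init_edge_cases) (auto simp: depth_rank_def dest!: length_le_height)

lemma depth_rank_step:
  assumes "flow_step D0 e t e' t'" "e' \<noteq> ER"
  shows "depth_rank e < depth_rank e'"
  using assms(1)
proof (cases rule: init_flow_step_cases)
  case (leaf j)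
  then show ?thesis
    using length_le_height[of "lm ! j" Tm] leaf_Tm[of j] by (auto simp: depth_rank_def into_Tm_def)
next
  case (junction j)
  then show ?thesis
    using assms(2) length_le_height[of "lp ! target j" Tp] leaf_Tp[of j]
    by (auto simp: depth_rank_def out_of_Tp_def split: if_splits)
next
  case (merge w b)
  then show ?thesis
    using assms(2) length_le_height[of "w @ [b]" Tp] by (auto simp: depth_rank_def out_of_Tp_def split: if_splits)
qed (auto simp: depth_rank_def into_Tm_def)

lemma red_free_trajectory_short:
  assumes "trajectory D0 ss" "red_sum D0 ss = 0"
  shows "length ss \<le> 2 * hmax + 3"
proof -
  have no_root: "\<forall>p\<in>set ss. fst p \<noteq> ER"
    using assms(2) unfolding red_sum_def by (auto simp: init_sd_simps sum_list_eq_0_iff)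
  have steps: "successively (flows D0) ss" and edges: "\<forall>p\<in>set ss. fst p \<in> sd_edges D0"
    using assms(1) unfolding trajectory_def by auto
  have "successively (\<lambda>p q. depth_rank (fst p) < depth_rank (fst q)) ss"
    using steps by (rule successively_mono) (use depth_rank_step no_root in blast)
  moreover have "\<forall>p\<in>set ss. depth_rank (fst p) \<le> 2 * hmax + 2" using edges depth_rank_le by blast
  ultimately have "length ss \<le> Suc (2 * hmax + 2)" by (rule successively_less_length_le)
  then show ?thesis by simp
qed

text \<open>Junction edges and the root edge alternate along a trajectory, so junctions_passed and
  red_sum differ by at most one; phase (0 between a junction and the next root edge) pins down
  the difference.\<close>
definition phase :: "eid \<Rightarrow> int" where
  "phase e = (case e of EP _ \<Rightarrow> 0 | _ \<Rightarrow> -1)"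

definition junctions_passed :: "(eid \<times> real) list \<Rightarrow> nat" where
  "junctions_passed ss = length (filter (is_junction \<circ> fst) (butlast ss))"

lemma phase_step:
  assumes "flow_step D0 e t e' t'"
  shows "(if is_junction e then 1 else 0) + phase e = int (sd_red D0 e') + phase e'"
  using assms
  by (cases rule: init_flow_step_cases)
    (auto simp: phase_def into_Tm_def out_of_Tp_def is_junction_def init_sd_simps)

lemma junctions_passed_snoc:
  assumes "xs \<noteq> []"
  shows "junctions_passed (xs @ [q]) = junctions_passed xs + (if is_junction (fst (last xs)) then 1 else 0)"
  using assms by (cases xs rule: rev_cases) (simp_all add: junctions_passed_def butlast_append)

lemma junctions_passed_red_sum:
  "trajectory D0 ss \<Longrightarrow> int (junctions_passed ss) - int (red_sum D0 ss) - phase (fst (last ss)) \<in> {0, 1}"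
proof (induction ss rule: rev_induct)
  case (snoc q xs)
  show ?case
  proof (cases "xs = []")
    case True
    then show ?thesis
      by (cases "fst q") (simp_all add: junctions_passed_def red_sum_def phase_def init_sd_simps)
  next
    case False
    note step = trajectory_snoc[OF snoc.prems False]
    then have "(if is_junction (fst (last xs)) then 1 else 0) + phase (fst (last xs))
        = int (sd_red D0 (fst q)) + phase (fst q)"
      using phase_step by blast
    then have "int (junctions_passed (xs @ [q])) - int (red_sum D0 (xs @ [q])) - phase (fst (last (xs @ [q])))
        = int (junctions_passed xs) - int (red_sum D0 xs) - phase (fst (last xs))"
      using False by (auto simp: junctions_passed_snoc red_sum_def)
    then show ?thesis using snoc.IH step by simp
  qed
qed (simp add: trajectory_def)

lemma blue_sum_snoc: "blue_sum D (xs @ [q]) = blue_sum D xs + sd_blue D (fst q)"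
  by (simp add: blue_sum_def)

lemma trajectory_orbit:
  "trajectory D0 ss \<Longrightarrow> \<exists>y0. 0 \<le> y0 \<and> y0 < 1 \<and> (ghat ^^ junctions_passed ss) y0
     = edge_pos (fst (last ss)) (snd (last ss)) + real (blue_sum D0 (butlast ss))"
proof (induction ss rule: rev_induct)
  case (snoc q xs)
  show ?case
  proof (cases "xs = []")
    case True
    then show ?thesis
      using snoc.prems edge_pos_bounds
      by (intro exI[of _ "edge_pos (fst q) (snd q)"]) (auto simp: trajectory_def junctions_passed_def blue_sum_def)
  next
    case False
    define p where "p = last xs"
    note step = trajectory_snoc[OF snoc.prems False]
    obtain y0 where y0: "0 \<le> y0" "y0 < 1"
      "(ghat ^^ junctions_passed xs) y0 = edge_pos (fst p) (snd p) + real (blue_sum D0 (butlast xs))"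
      using snoc.IH step unfolding p_def by blast
    have "0 \<le> snd p" "snd p < 1" using step unfolding p_def trajectory_def by auto
    then have "edge_pos (fst q) (snd q) + real (sd_blue D0 (fst p))
        = (if is_junction (fst p) then ghat (edge_pos (fst p) (snd p)) else edge_pos (fst p) (snd p))"
      using edge_pos_step step unfolding p_def by blast
    moreover have "blue_sum D0 (butlast (xs @ [q])) = blue_sum D0 (butlast xs) + sd_blue D0 (fst p)"
      using False blue_sum_snoc[of D0 "butlast xs" p] unfolding p_def by simp
    ultimately show ?thesis
      using y0 False ghat_shift by (intro exI[of _ y0]) (auto simp: junctions_passed_snoc p_def)
  qed
qed (simp add: trajectory_def)

lemma init_blue_le_1: "sd_blue D0 e \<le> 1"
  by (cases e) (simp_all add: init_sd_def Let_def)

lemma trajectory_tracks_ghat: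
  assumes "trajectory D0 ss"
  shows "\<bar>(ghat ^^ red_sum D0 ss) 0 - real (blue_sum D0 ss)\<bar> \<le> 4"
proof -
  let ?q = "last ss" and ?J = "junctions_passed ss" and ?R = "red_sum D0 ss"
  obtain y0 where y0: "0 \<le> y0" "y0 < 1"
    "(ghat ^^ ?J) y0 = edge_pos (fst ?q) (snd ?q) + real (blue_sum D0 (butlast ss))"
    using trajectory_orbit[OF assms] by blast
  have "ss = butlast ss @ [?q]" using assms by (simp add: trajectory_def)
  then have "blue_sum D0 ss = blue_sum D0 (butlast ss) + sd_blue D0 (fst ?q)"
    by (metis blue_sum_snoc)
  moreover have "0 \<le> edge_pos (fst ?q) (snd ?q)" "edge_pos (fst ?q) (snd ?q) < 1"
    using edge_pos_bounds assms by (auto simp: trajectory_def)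
  ultimately have orbit: "\<bar>(ghat ^^ ?J) y0 - real (blue_sum D0 ss)\<bar> \<le> 1"
    using y0(3) init_blue_le_1[of "fst ?q"] by (simp add: abs_le_iff)
  have "\<bar>real ?R - real ?J\<bar> \<le> 1"
    using junctions_passed_red_sum[OF assms] by (auto simp: phase_def split: eid.splits)
  then have count: "\<bar>(ghat ^^ ?R) y0 - (ghat ^^ ?J) y0\<bar> \<le> 2"
    using funpow_ghat_diff[of ?R y0 ?J] by simp
  have "\<bar>(ghat ^^ ?R) y0 - (ghat ^^ ?R) 0\<bar> \<le> 1"
    using funpow_ghat_unit_interval y0 by simp
  then show ?thesis using orbit count by linarith
qed

end

theorem mainTheorem4:
  fixes Tm Tp :: tree and n k :: nat and D :: sd
  assumes "nleaves Tm = n" and "nleaves Tp = n" and "k < n"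
    and "ruleI\<^sup>*\<^sup>* (init_sd Tm Tp k) D"
    and "\<not> (\<exists>es. ms_strand D es)"
  shows "(\<exists>cs. is_cycle D cs)
       \<and> (\<forall>cs. is_cycle D cs \<longrightarrow>
              cycle_red D cs \<ge> 1
            \<and> rot_number (glift Tm Tp k) = frac (real (cycle_blue D cs) / real (cycle_red D cs)))"
proof -
  interpret tree_pair_element Tm Tp n k using assms(1-3) by unfold_locales
  have wf_D: "wf_sd D" and lift: "trajectories_lift D D0"
    using rtranclp_ruleI_wf_sd_and_lift[OF assms(4) wf_sd_init] by auto
  have tracks: "\<bar>(ghat ^^ red_sum D ss) 0 - real (blue_sum D ss)\<bar> \<le> 4" if "trajectory D ss" for ss
    using lift that trajectory_tracks_ghat unfolding trajectories_lift_def by metis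
  have short: "length ss \<le> 2 * hmax + 3" if "trajectory D ss" "red_sum D ss = 0" for ss
    using lift that red_free_trajectory_short unfolding trajectories_lift_def by (metis order_trans)
  have "cycle_red D cs \<ge> 1 \<and> rot_number ghat = frac (real (cycle_blue D cs) / real (cycle_red D cs))"
    if "is_cycle D cs" for cs
  proof -
    interpret reduced_cycle D cs using wf_D that assms(5) by unfold_locales
    have red: "1 \<le> cycle_red D cs" using cycle_red_pos short by blast
    then have "(\<lambda>N. (ghat ^^ N) 0 / real N) \<longlonglongrightarrow> real (cycle_blue D cs) / real (cycle_red D cs)"
      using LIMSEQ_cycle_ratio tracks funpow_ghat_displacement by blast
    then show ?thesis using red unfolding rot_number_def by (simp add: limI)
  qed
  then show ?thesis using wf_sd_has_cycle[OF wf_D] by blast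
qed

end
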